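(* Let $\sigma^2>0$, let $P_X$ be a distribution on $\mathbb{R}^d$, let $\phi^r:\mathbb{R}^d\to\mathbb{R}^r$ be a feature map, let $L\in\mathbb{R}^{r\times r}$ be a fixed matrix and $\phi^L(x):=L^\top\phi^r(x)\in\mathbb{R}^r$. Assume $\|\phi^L(x)\|_2\le K$ for all $x$ (training and test points), and that $\Sigma:=\mathbb{E}_{x\sim P_X}[\phi^L(x)\phi^L(x)^\top]$ satisfies $\lambda_{\min}(\Sigma)>0$. Let $\delta>0$ and let $N\ge k\ge\frac83\log(4r/\delta)\left(\frac{8K^2}{\lambda_{\min}(\Sigma)}\right)^2$. Let $\mathbf{x}_1,\ldots,\mathbf{x}_N\sim P_X$ be i.i.d., and let $s_1,\ldots,s_k\in\{1,\ldots,N\}$ be drawn uniformly without replacement. Define $\hat\Sigma_N:=\frac1N\sum_{i=1}^N\phi^L(\mathbf{x}_i)\phi^L(\mathbf{x}_i)^\top$ and $\hat\Sigma_k:=\frac1k\sum_{i=1}^k\phi^L(\mathbf{x}_{s_i})\phi^L(\mathbf{x}_{s_i})^\top$. For test points $\mathbf{x}'_1,\ldots,\mathbf{x}'_{N'}$ let $\Phi^L_{\mathbf{x}'}\in\mathbb{R}^{N'\times r}$ have rows $\phi^L(\mathbf{x}'_i)^\top$, and define $$S^B_{\mathbf{x}',\mathbf{x}'}:=\Phi^L_{\mathbf{x}'}\Big(\tfrac{1}{\sigma^2}N\hat\Sigma_N+I_r\Big)^{-1}\Phi^{L\top}_{\mathbf{x}'},\qquad S^{B,k}_{\mathbf{x}',\mathbf{x}'}:=\Phi^L_{\mathbf{x}'}\Big(\tfrac{1}{\sigma^2}N\hat\Sigma_k+I_r\Big)^{-1}\Phi^{L\top}_{\mathbf{x}'}.$$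 Then with probability at least $1-\delta$, for any $N'$ and any test points $\mathbf{x}'_1,\ldots,\mathbf{x}'_{N'}$, $$\big\|S^{B,k}_{\mathbf{x}',\mathbf{x}'}-S^B_{\mathbf{x}',\mathbf{x}'}\big\|_2\le N'\,\frac{2K^4}{\lambda_{\min}(\Sigma)}\sqrt{\frac{8\log(4r/\delta)}{3k}}.$$
   Context: $\|\cdot\|_2$ is the spectral norm and $\lambda_{\min}$ the smallest eigenvalue. $S^B$ is the (full-data) predictive covariance with features $\phi^L$ and noise variance $\sigma^2$; $S^{B,k}$ is its subsampled approximation. *)

theory Defs
  imports "HOL-Probability.Probability"
begin

definition outer :: "real^'r \<Rightarrow> real^'r \<Rightarrow> real^'r^'r" where
  "outer v w = (\<chi> i j. v $ i * w $ j)"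

definition lambda_min :: "real^'r^'r \<Rightarrow> real" where
  "lambda_min A = Min {l. \<exists>v. v \<noteq> 0 \<and> A *v v = l *\<^sub>R v}"

definition spec_norm :: "nat \<Rightarrow> (nat \<Rightarrow> nat \<Rightarrow> real) \<Rightarrow> real" where
  "spec_norm n M = Sup {sqrt (\<Sum>i<n. (\<Sum>j<n. M i j * v j)^2) | v. (\<Sum>j<n. (v j)^2) \<le> 1}"

definition second_moment :: "'d measure \<Rightarrow> ('d \<Rightarrow> real^'r) \<Rightarrow> real^'r^'r" where
  "second_moment P phi = (\<chi> i j. integral\<^sup>L P (\<lambda>x. phi x $ i * phi x $ j))"

definition pred_cov :: "real \<Rightarrow> nat \<Rightarrow> real^'r^'r \<Rightarrow> ('d \<Rightarrow> real^'r) \<Rightarrow> 'd list \<Rightarrow> nat \<Rightarrow> nat \<Rightarrow> real" where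
  "pred_cov sigma2 N Shat phi xs i j =
     phi (xs ! i) \<bullet> (matrix_inv ((real N / sigma2) *\<^sub>R Shat + mat 1) *v phi (xs ! j))"

text \<open>Index sets for uniform sampling of k indices from {0..<N} without replacement (ordered).\<close>
definition subsamples :: "nat \<Rightarrow> nat \<Rightarrow> (nat \<Rightarrow> nat) set" where
  "subsamples N k = {s \<in> {0..<k} \<rightarrow>\<^sub>E {0..<N}. inj_on s {0..<k}}"

end

theory Submission
  imports Defs
begin

(*
  Call a matrix A alpha-close to Sigma if |v' A v - v' Sigma v| <= alpha v' Sigma v for all v.
  If both empirical second moments SigmaN and Sigmak are alpha-close to Sigma, then for every c >= 0
  the bilinear form of (c Sigmak + I)^-1 - (c SigmaN + I)^-1 is bounded by alpha / (2 (1 - alpha)):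
  by the second resolvent identity it equals c a' (SigmaN - Sigmak) b with a = (c Sigmak + I)^-1 p,
  b = (c SigmaN + I)^-1 q, the middle factor is 2 alpha-small relative to Sigma, and
  4 c (1 - alpha) a' Sigma a <= |p|^2 (likewise for b). So every entry of S^{B,k} - S^B is at most
  alpha K^2 / (2 (1 - alpha)), and the spectral norm at most N' times that.

  Closeness comes from the multiplicative Chernoff bound for the bounded i.i.d. variables
  (phi(x_i) . v)^2 at each point v of a 1/20-net of the Sigma-unit sphere, which has at most
  (23 K^2 / lambda_min)^r points; a union bound over the net and a net argument give closeness
  for all v. Given the subsample s, the points x_(s i) are again i.i.d., so this works for every
  fixed s, and averaging over the uniformly chosen s gives the event in the product space.
*)

section \<open>Symmetric matrices and quadratic forms\<close>

definition symmetric_matrix :: "real^'n^'n \<Rightarrow> bool" where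
  "symmetric_matrix A \<longleftrightarrow> transpose A = A"

definition quad_form :: "real^'n^'n \<Rightarrow> real^'n \<Rightarrow> real" where
  "quad_form A v = v \<bullet> (A *v v)"

lemma symmetric_matrix_inner_commute:
  "symmetric_matrix A \<Longrightarrow> x \<bullet> (A *v y) = y \<bullet> (A *v (x::real^'n))"
  by (metis dot_lmul_matrix inner_commute symmetric_matrix_def vector_transpose_matrix)

lemma symmetric_matrix_add: "symmetric_matrix A \<Longrightarrow> symmetric_matrix B \<Longrightarrow> symmetric_matrix (A + B)"
  and symmetric_matrix_diff: "symmetric_matrix A \<Longrightarrow> symmetric_matrix B \<Longrightarrow> symmetric_matrix (A - B)"
  and symmetric_matrix_scaleR: "symmetric_matrix A \<Longrightarrow> symmetric_matrix (c *\<^sub>R A)"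
  and symmetric_matrix_mat: "symmetric_matrix (mat a)"
  and symmetric_matrix_outer: "symmetric_matrix (outer v v)"
  by (auto simp: symmetric_matrix_def transpose_def vec_eq_iff outer_def mat_def mult.commute)

lemma symmetric_matrix_sum:
  "(\<And>i. i \<in> I \<Longrightarrow> symmetric_matrix (M i)) \<Longrightarrow> symmetric_matrix (\<Sum>i\<in>I. M i)"
  by (induction I rule: infinite_finite_induct)
     (auto simp: symmetric_matrix_add symmetric_matrix_def transpose_def vec_eq_iff)

lemma symmetric_matrix_second_moment: "symmetric_matrix (second_moment P \<phi>)"
  by (simp add: symmetric_matrix_def second_moment_def transpose_def vec_eq_iff mult.commute)

lemma matrix_sum_mult_vector: "(\<Sum>i\<in>I. M i) *v (v::real^'n) = (\<Sum>i\<in>I. M i *v v)"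
  by (induction I rule: infinite_finite_induct) (auto simp: matrix_vector_mult_add_rdistrib)

lemma matrix_vector_mult_sum: "A *v (\<Sum>i\<in>I. f i) = (\<Sum>i\<in>I. A *v f i)" for A :: "real^'n^'m"
  by (induction I rule: infinite_finite_induct) (auto simp: matrix_vector_right_distrib)

lemma outer_mult_vector: "outer a a *v v = (a \<bullet> v) *\<^sub>R a"
  by (simp add: vec_eq_iff outer_def matrix_vector_mult_def inner_vec_def sum_distrib_left mult_ac)

lemma quad_form_zero [simp]: "quad_form S 0 = 0"
  by (simp add: quad_form_def)

lemma quad_form_scaleR: "quad_form S (c *\<^sub>R v) = c^2 * quad_form S v"
  by (simp add: quad_form_def matrix_vector_mult_scaleR power2_eq_square)

lemma quad_form_uminus: "quad_form S (- v) = quad_form S v"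
  using quad_form_scaleR[of S "-1" v] by simp

lemma quad_form_diff_matrix: "quad_form (A - B) v = quad_form A v - quad_form B v"
  by (simp add: quad_form_def matrix_vector_mult_diff_rdistrib inner_diff_right)

lemma quad_form_parallelogram:
  "quad_form S (u + v) + quad_form S (u - v) = 2 * quad_form S u + 2 * quad_form S v"
  by (simp add: quad_form_def matrix_vector_right_distrib matrix_vector_mult_diff_distrib
      inner_add_left inner_add_right inner_diff_left inner_diff_right algebra_simps)

lemma quad_form_add:
  "symmetric_matrix S \<Longrightarrow> quad_form S (u + v) = quad_form S u + 2 * (u \<bullet> (S *v v)) + quad_form S v"
  using symmetric_matrix_inner_commute[of S v u]
  by (simp add: quad_form_def matrix_vector_right_distrib inner_add_left inner_add_right algebra_simps)

lemma quad_form_polarization: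
  "symmetric_matrix S \<Longrightarrow> quad_form S (u + v) - quad_form S (u - v) = 4 * (u \<bullet> (S *v v))"
  using symmetric_matrix_inner_commute[of S v u]
  by (simp add: quad_form_def matrix_vector_right_distrib matrix_vector_mult_diff_distrib inner_add_left
      inner_add_right inner_diff_left inner_diff_right algebra_simps)

lemma quad_form_diff_eq:
  "symmetric_matrix S \<Longrightarrow> quad_form S u - quad_form S v = (u - v) \<bullet> (S *v (u + v))"
  using symmetric_matrix_inner_commute[of S u v]
  by (simp add: quad_form_def matrix_vector_right_distrib inner_diff_left inner_add_right algebra_simps)

lemma symmetric_matrix_eigenvectors_orthogonal:
  assumes "symmetric_matrix A" "A *v u = l1 *\<^sub>R u" "A *v w = l2 *\<^sub>R w" "l1 \<noteq> l2"
  shows "u \<bullet> (w::real^'n) = 0"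
proof -
  have "l1 * (u \<bullet> w) = w \<bullet> (A *v u)" using assms by (simp add: inner_commute)
  also have "\<dots> = u \<bullet> (A *v w)" using symmetric_matrix_inner_commute[OF assms(1)] by metis
  also have "\<dots> = l2 * (u \<bullet> w)" using assms by simp
  finally show ?thesis using assms(4) by simp
qed

lemma finite_eigenvalues_symmetric_matrix:
  assumes "symmetric_matrix (A::real^'n^'n)"
  shows "finite {l. \<exists>v. v \<noteq> 0 \<and> A *v v = l *\<^sub>R v}"
proof -
  define E where "E = {l. \<exists>v. v \<noteq> 0 \<and> A *v v = l *\<^sub>R v}"
  define f where "f l = (SOME v. v \<noteq> 0 \<and> A *v v = l *\<^sub>R v)" for l
  have f: "f l \<noteq> 0 \<and> A *v f l = l *\<^sub>R f l" if "l \<in> E" for l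
    using that unfolding E_def f_def by (metis (mono_tags, lifting) mem_Collect_eq someI_ex)
  have inj: "inj_on f E"
  proof (rule inj_onI)
    fix a b assume ab: "a \<in> E" "b \<in> E" "f a = f b"
    then have "a *\<^sub>R f a = b *\<^sub>R f a" using f by metis
    then show "a = b" using f[OF ab(1)] by (simp add: scaleR_cancel_right)
  qed
  have "pairwise orthogonal (f ` E)"
    unfolding pairwise_def orthogonal_def
    using symmetric_matrix_eigenvectors_orthogonal[OF assms] f by (metis imageE)
  moreover have "0 \<notin> f ` E" using f by auto
  ultimately have "independent (f ` E)" by (rule pairwise_orthogonal_independent)
  then have "finite (f ` E)" using independent_bound by blast
  then show ?thesis using inj finite_imageD unfolding E_def by blast
qed

lemma psd_quad_form_eq_zero_imp_mult_eq_zero: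
  assumes S: "symmetric_matrix S" and psd: "\<And>z. quad_form S z \<ge> 0" and u: "quad_form S u = 0"
  shows "S *v u = 0"
proof -
  define w where "w = S *v u"
  have uw: "u \<bullet> (S *v w) = w \<bullet> w"
    using symmetric_matrix_inner_commute[OF S, of u w] by (simp add: w_def)
  have "0 \<le> quad_form S (u + t *\<^sub>R w)" for t by (rule psd)
  also have "quad_form S (u + t *\<^sub>R w) = t * (2 * (w \<bullet> w) + t * quad_form S w)" for t
    by (simp add: quad_form_add[OF S] quad_form_scaleR u uw matrix_vector_mult_scaleR
        power2_eq_square algebra_simps)
  finally have nonneg: "0 \<le> t * (2 * (w \<bullet> w) + t * quad_form S w)" for t .
  show ?thesis
  proof (rule ccontr)
    assume "S *v u \<noteq> 0"
    then have ww: "w \<bullet> w > 0" unfolding w_def by simp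
    \<comment> \<open>for small negative \<open>t\<close> the linear term \<open>2 t (w \<bullet> w)\<close> dominates\<close>
    define t where "t = - (w \<bullet> w) / (\<bar>quad_form S w\<bar> + 1)"
    have t: "t < 0" unfolding t_def using ww by (simp add: divide_pos_pos)
    have "t * quad_form S w \<ge> - (w \<bullet> w)"
    proof -
      have "\<bar>t * quad_form S w\<bar> \<le> (w \<bullet> w) / (\<bar>quad_form S w\<bar> + 1) * \<bar>quad_form S w\<bar>"
        unfolding t_def using ww by (simp add: abs_mult)
      also have "\<dots> \<le> w \<bullet> w" using ww by (simp add: divide_le_eq mult.commute)
      finally show ?thesis by linarith
    qed
    then have "2 * (w \<bullet> w) + t * quad_form S w > 0" using ww by linarith
    then show False using nonneg[of t] t by (smt (verit) mult_neg_pos)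
  qed
qed

lemma lambda_min_mult_norm_le_quad_form:
  assumes A: "symmetric_matrix (A::real^'n^'n)"
  shows "lambda_min A * (norm v)^2 \<le> quad_form A v"
proof -
  have "sphere (0::real^'n) 1 \<noteq> {}"
    using vector_choose_size[of 1] by auto
  moreover have "continuous_on (sphere 0 1) (quad_form A)"
    unfolding quad_form_def by (intro continuous_intros linear_continuous_on matrix_vector_mul_bounded_linear)
  ultimately obtain u0 where u0: "norm u0 = 1" and min: "\<And>u. norm u = 1 \<Longrightarrow> quad_form A u0 \<le> quad_form A u"
    using continuous_attains_inf[OF compact_sphere] by (metis mem_sphere_0)
  define \<mu> where "\<mu> = quad_form A u0"
  have hom: "\<mu> * (norm z)^2 \<le> quad_form A z" for z
  proof (cases "z = 0")
    case False
    have "\<mu> \<le> quad_form A ((1 / norm z) *\<^sub>R z)" unfolding \<mu>_def using False by (intro min) simp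
    then show ?thesis using False by (simp add: quad_form_scaleR power_divide field_simps)
  qed simp
  define B where "B = A - \<mu> *\<^sub>R mat 1"
  have qB: "quad_form B z = quad_form A z - \<mu> * (norm z)^2" for z
    by (simp add: B_def quad_form_def matrix_vector_mult_diff_rdistrib inner_diff_right
        scaleR_matrix_vector_assoc[symmetric] power2_norm_eq_inner)
  have "B *v u0 = 0"
  proof (rule psd_quad_form_eq_zero_imp_mult_eq_zero)
    show "symmetric_matrix B" unfolding B_def
      by (intro symmetric_matrix_diff symmetric_matrix_scaleR A symmetric_matrix_mat)
  qed (use hom u0 in \<open>auto simp: qB \<mu>_def\<close>)
  then have "A *v u0 = \<mu> *\<^sub>R u0"
    by (simp add: B_def matrix_vector_mult_diff_rdistrib scaleR_matrix_vector_assoc[symmetric])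
  then have "\<mu> \<in> {l. \<exists>v. v \<noteq> 0 \<and> A *v v = l *\<^sub>R v}" using u0 by (auto intro!: exI[of _ u0])
  then have "lambda_min A \<le> \<mu>"
    unfolding lambda_min_def using finite_eigenvalues_symmetric_matrix[OF A] by (rule Min_le[rotated])
  then show ?thesis using hom[of v] by (meson order_trans mult_right_mono zero_le_power2)
qed

lemma quad_form_nonneg_of_pos_def:
  "(\<And>y. y \<noteq> 0 \<Longrightarrow> quad_form S y > 0) \<Longrightarrow> quad_form S y \<ge> 0"
  by (cases "y = 0") (auto intro: less_imp_le)

lemma sq_le_of_forall_weighted_am_gm:
  fixes m \<kappa> A B :: real
  assumes amgm: "\<And>s. s > 0 \<Longrightarrow> 2 * s * m \<le> \<kappa> * (s^2 * A + B)"
    and m: "m \<ge> 0" and A: "A > 0" and B: "B \<ge> 0" and \<kappa>: "\<kappa> \<ge> 0"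
  shows "m^2 \<le> \<kappa>^2 * A * B"
proof (cases "m = 0")
  case False
  then have mpos: "m > 0" using m by simp
  have kpos: "\<kappa> > 0"
    using amgm[of 1] mpos \<kappa> by (cases "\<kappa> = 0") auto
  define s where "s = m / (\<kappa> * A)"
  have s: "s > 0" unfolding s_def using mpos kpos A by simp
  have "2 * s * m \<le> \<kappa> * (s^2 * A) + \<kappa> * B" using amgm[OF s] by (simp add: algebra_simps)
  also have "\<kappa> * (s^2 * A) = s * m" unfolding s_def using kpos A by (simp add: power2_eq_square field_simps)
  finally have "s * m \<le> \<kappa> * B" by (simp add: mult.commute)
  then show ?thesis unfolding s_def using kpos A by (simp add: power2_eq_square field_simps)
qed (use A B in simp)

lemma bilinear_sq_le_of_quad_form_le:
  assumes X: "symmetric_matrix X" and bound: "\<And>y. \<bar>quad_form X y\<bar> \<le> \<kappa> * quad_form S y"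
    and \<kappa>: "\<kappa> \<ge> 0" and pd: "\<And>y. y \<noteq> 0 \<Longrightarrow> quad_form S y > 0"
  shows "(a \<bullet> (X *v b))^2 \<le> \<kappa>^2 * quad_form S a * quad_form S b"
proof (cases "a = 0")
  case False
  have "2 * s * \<bar>a \<bullet> (X *v b)\<bar> \<le> \<kappa> * (s^2 * quad_form S a + quad_form S b)" if s: "s > 0" for s
  proof -
    have "4 * (s * \<bar>a \<bullet> (X *v b)\<bar>) = \<bar>quad_form X (s *\<^sub>R a + b) - quad_form X (s *\<^sub>R a - b)\<bar>"
      using quad_form_polarization[OF X, of "s *\<^sub>R a" b] s by (simp add: abs_mult)
    also have "\<dots> \<le> \<kappa> * (quad_form S (s *\<^sub>R a + b) + quad_form S (s *\<^sub>R a - b))"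
      using bound[of "s *\<^sub>R a + b"] bound[of "s *\<^sub>R a - b"] by (simp add: algebra_simps abs_le_iff)
    also have "\<dots> = 2 * \<kappa> * (s^2 * quad_form S a + quad_form S b)"
      using quad_form_parallelogram[of S "s *\<^sub>R a" b] by (simp add: quad_form_scaleR algebra_simps)
    finally show ?thesis by simp
  qed
  then have "\<bar>a \<bullet> (X *v b)\<bar>^2 \<le> \<kappa>^2 * quad_form S a * quad_form S b"
    by (rule sq_le_of_forall_weighted_am_gm)
       (use pd[OF False] quad_form_nonneg_of_pos_def[OF pd] \<kappa> in auto)
  then show ?thesis by simp
qed simp

lemma quad_form_cauchy_schwarz:
  assumes "symmetric_matrix S" "\<And>y. y \<noteq> 0 \<Longrightarrow> quad_form S y > 0"
  shows "a \<bullet> (S *v b) \<le> sqrt (quad_form S a) * sqrt (quad_form S b)"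
proof -
  have "(a \<bullet> (S *v b))^2 \<le> 1^2 * quad_form S a * quad_form S b"
    by (rule bilinear_sq_le_of_quad_form_le[OF assms(1) _ _ assms(2)])
       (auto intro: quad_form_nonneg_of_pos_def[OF assms(2)])
  then have "\<bar>a \<bullet> (S *v b)\<bar> \<le> sqrt (quad_form S a * quad_form S b)"
    by (simp add: real_le_rsqrt)
  then show ?thesis by (simp add: real_sqrt_mult)
qed

lemma sqrt_quad_form_triangle:
  assumes S: "symmetric_matrix S" and pd: "\<And>y. y \<noteq> 0 \<Longrightarrow> quad_form S y > 0"
  shows "sqrt (quad_form S (a + b)) \<le> sqrt (quad_form S a) + sqrt (quad_form S b)"
proof -
  have q0: "quad_form S y \<ge> 0" for y by (rule quad_form_nonneg_of_pos_def[OF pd])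
  have "quad_form S (a + b) \<le> quad_form S a + 2 * (sqrt (quad_form S a) * sqrt (quad_form S b)) + quad_form S b"
    using quad_form_add[OF S, of a b] quad_form_cauchy_schwarz[OF S pd, of a b] by simp
  also have "\<dots> = (sqrt (quad_form S a) + sqrt (quad_form S b))^2"
    using q0[of a] q0[of b] by (simp add: power2_eq_square algebra_simps)
  finally show ?thesis by (simp add: real_le_lsqrt q0)
qed

section \<open>Perturbation of regularised inverses\<close>

lemma matrix_inv_scaled_psd_plus_id:
  fixes M :: "real^'n^'n"
  assumes psd: "\<And>y. quad_form M y \<ge> 0" and c: "c \<ge> 0"
  shows "(c *\<^sub>R M + mat 1) ** matrix_inv (c *\<^sub>R M + mat 1) = mat 1"
    and "matrix_inv (c *\<^sub>R M + mat 1) ** (c *\<^sub>R M + mat 1) = mat 1"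
proof -
  define A where "A = c *\<^sub>R M + mat 1"
  have "y = 0" if "A *v y = 0" for y
  proof -
    have "c * quad_form M y + y \<bullet> y = y \<bullet> (A *v y)"
      unfolding A_def quad_form_def
      by (simp add: matrix_vector_mult_add_rdistrib scaleR_matrix_vector_assoc[symmetric] inner_add_right)
    then have "c * quad_form M y + y \<bullet> y = 0" using that by simp
    moreover have "c * quad_form M y \<ge> 0" using psd c by simp
    ultimately show "y = 0" by (smt (verit) inner_ge_zero inner_eq_zero_iff)
  qed
  then have "invertible A"
    by (simp add: invertible_left_inverse matrix_left_invertible_ker)
  then have "A ** matrix_inv A = mat 1 \<and> matrix_inv A ** A = mat 1"
    unfolding invertible_def matrix_inv_def by (rule someI_ex)
  then show "A ** matrix_inv A = mat 1" "matrix_inv A ** A = mat 1" by auto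
qed

lemma four_mult_quad_form_le_norm_sq:
  fixes M :: "real^'n^'n"
  assumes "c \<ge> 0"
  shows "4 * c * quad_form M a \<le> (norm ((c *\<^sub>R M + mat 1) *v a))^2"
proof -
  define v where "v = M *v a"
  have "(c *\<^sub>R M + mat 1) *v a = c *\<^sub>R v + a"
    unfolding v_def by (simp add: matrix_vector_mult_add_rdistrib scaleR_matrix_vector_assoc)
  moreover have "(c *\<^sub>R v + a) \<bullet> (c *\<^sub>R v + a) = (c *\<^sub>R v - a) \<bullet> (c *\<^sub>R v - a) + 4 * c * (a \<bullet> v)"
    by (simp add: inner_add_left inner_add_right inner_diff_left inner_diff_right inner_commute[of v a]
        algebra_simps)
  ultimately show ?thesis
    unfolding quad_form_def v_def[symmetric] power2_norm_eq_inner by simp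
qed

lemma resolvent_difference_eq:
  fixes Sk SN :: "real^'n^'n"
  assumes Sk: "symmetric_matrix Sk" and psd: "\<And>y. quad_form Sk y \<ge> 0" "\<And>y. quad_form SN y \<ge> 0"
    and c: "c \<ge> 0"
  defines "Ak \<equiv> matrix_inv (c *\<^sub>R Sk + mat 1)" and "AN \<equiv> matrix_inv (c *\<^sub>R SN + mat 1)"
  shows "p \<bullet> (Ak *v q) - p \<bullet> (AN *v q) = c * ((Ak *v p) \<bullet> ((SN - Sk) *v (AN *v q)))"
proof -
  note invk = matrix_inv_scaled_psd_plus_id[OF psd(1) c, folded Ak_def]
  note invN = matrix_inv_scaled_psd_plus_id[OF psd(2) c, folded AN_def]
  have symk: "symmetric_matrix (c *\<^sub>R Sk + mat 1)"
    by (intro symmetric_matrix_add symmetric_matrix_scaleR Sk symmetric_matrix_mat)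
  have k_left: "Ak *v ((c *\<^sub>R Sk + mat 1) *v y) = y" and k_right: "(c *\<^sub>R Sk + mat 1) *v (Ak *v y) = y"
    and N_right: "(c *\<^sub>R SN + mat 1) *v (AN *v y) = y" for y
    by (simp_all add: matrix_vector_mul_assoc invk invN)
  have adj: "p \<bullet> (Ak *v y) = (Ak *v p) \<bullet> y" for y
  proof -
    have "p \<bullet> (Ak *v y) = ((c *\<^sub>R Sk + mat 1) *v (Ak *v p)) \<bullet> (Ak *v y)" by (simp only: k_right)
    also have "\<dots> = (Ak *v p) \<bullet> ((c *\<^sub>R Sk + mat 1) *v (Ak *v y))"
      using symmetric_matrix_inner_commute[OF symk] inner_commute by metis
    finally show ?thesis by (simp only: k_right)
  qed
  \<comment> \<open>second resolvent identity, applied to \<open>q\<close>\<close>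
  have "Ak *v q - AN *v q = Ak *v (q - (c *\<^sub>R Sk + mat 1) *v (AN *v q))"
    by (simp add: matrix_vector_mult_diff_distrib k_left)
  also have "q - (c *\<^sub>R Sk + mat 1) *v (AN *v q) = c *\<^sub>R ((SN - Sk) *v (AN *v q))"
    by (subst (1) N_right[of q, symmetric])
       (simp add: matrix_vector_mult_add_rdistrib matrix_vector_mult_diff_rdistrib
        scaleR_matrix_vector_assoc[symmetric] scaleR_diff_right)
  finally have "p \<bullet> (Ak *v q - AN *v q) = p \<bullet> (Ak *v (c *\<^sub>R ((SN - Sk) *v (AN *v q))))"
    by (rule arg_cong)
  then show ?thesis
    by (simp only: inner_diff_right matrix_vector_mult_scaleR inner_scaleR_right adj)
qed

lemma quad_form_resolvent_le:
  fixes M S :: "real^'n^'n"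
  assumes psd: "\<And>y. quad_form M y \<ge> 0" and lower: "\<And>y. \<beta> * quad_form S y \<le> quad_form M y"
    and c: "c \<ge> 0"
  shows "4 * \<beta> * (c * quad_form S (matrix_inv (c *\<^sub>R M + mat 1) *v p)) \<le> (norm p)^2"
proof -
  define a where "a = matrix_inv (c *\<^sub>R M + mat 1) *v p"
  have Ma: "(c *\<^sub>R M + mat 1) *v a = p"
    unfolding a_def by (simp add: matrix_vector_mul_assoc matrix_inv_scaled_psd_plus_id[OF psd c])
  have "4 * \<beta> * (c * quad_form S a) = 4 * c * (\<beta> * quad_form S a)" by (simp add: mult_ac)
  also have "\<dots> \<le> 4 * c * quad_form M a" using lower[of a] c by (intro mult_left_mono) auto
  also have "\<dots> \<le> (norm p)^2" using four_mult_quad_form_le_norm_sq[OF c, of M a] Ma by simp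
  finally show ?thesis unfolding a_def .
qed

lemma resolvent_difference_bound:
  fixes S Sk SN :: "real^'n^'n"
  assumes pd: "\<And>y. y \<noteq> 0 \<Longrightarrow> quad_form S y > 0"
    and Sk: "symmetric_matrix Sk" and SN: "symmetric_matrix SN"
    and \<alpha>: "0 \<le> \<alpha>" "\<alpha> < 1" and c: "c \<ge> 0"
    and hk: "\<And>y. \<bar>quad_form Sk y - quad_form S y\<bar> \<le> \<alpha> * quad_form S y"
    and hN: "\<And>y. \<bar>quad_form SN y - quad_form S y\<bar> \<le> \<alpha> * quad_form S y"
  shows "\<bar>p \<bullet> (matrix_inv (c *\<^sub>R Sk + mat 1) *v q) - p \<bullet> (matrix_inv (c *\<^sub>R SN + mat 1) *v q)\<bar>
          \<le> \<alpha> / (2 * (1 - \<alpha>)) * norm p * norm q"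
proof -
  have q0: "quad_form S y \<ge> 0" for y by (rule quad_form_nonneg_of_pos_def[OF pd])
  have lower: "(1 - \<alpha>) * quad_form S y \<le> quad_form Sk y" "(1 - \<alpha>) * quad_form S y \<le> quad_form SN y" for y
    using hk[of y] hN[of y] by (auto simp: abs_le_iff algebra_simps)
  have psd: "quad_form Sk y \<ge> 0" "quad_form SN y \<ge> 0" for y
    using order_trans[OF mult_nonneg_nonneg[OF _ q0] lower(1)] order_trans[OF mult_nonneg_nonneg[OF _ q0] lower(2)]
      \<alpha> by auto
  define a where "a = matrix_inv (c *\<^sub>R Sk + mat 1) *v p"
  define b where "b = matrix_inv (c *\<^sub>R SN + mat 1) *v q"
  define m where "m = a \<bullet> ((SN - Sk) *v b)"
  have "\<bar>quad_form (SN - Sk) y\<bar> \<le> (2 * \<alpha>) * quad_form S y" for y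
    using hk[of y] hN[of y] unfolding quad_form_diff_matrix by (simp add: abs_le_iff)
  then have m2: "m^2 \<le> (2 * \<alpha>)^2 * quad_form S a * quad_form S b"
    unfolding m_def using \<alpha> by (intro bilinear_sq_le_of_quad_form_le[OF symmetric_matrix_diff[OF SN Sk] _ _ pd]) auto
  define D where "D = 4 * (1 - \<alpha>)"
  have D: "D > 0" unfolding D_def using \<alpha> by simp
  have ca: "c * quad_form S a \<le> (norm p)^2 / D" and cb: "c * quad_form S b \<le> (norm q)^2 / D"
    using quad_form_resolvent_le[OF psd(1) lower(1) c, of p] quad_form_resolvent_le[OF psd(2) lower(2) c, of q] D
    unfolding a_def b_def D_def by (simp_all add: field_simps)
  have "(c * m)^2 \<le> (2 * \<alpha>)^2 * (c * quad_form S a) * (c * quad_form S b)"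
    using mult_left_mono[OF m2, of "c^2"] by (simp add: power_mult_distrib power2_eq_square mult_ac)
  also have "\<dots> \<le> (2 * \<alpha>)^2 * ((norm p)^2 / D) * ((norm q)^2 / D)"
    using c q0 D by (intro mult_mono mult_left_mono ca cb) auto
  also have "\<dots> = (\<alpha> / (2 * (1 - \<alpha>)) * norm p * norm q)^2"
  proof -
    have "1 - \<alpha> \<noteq> 0" using \<alpha> by simp
    then have "2 * \<alpha> / D = \<alpha> / (2 * (1 - \<alpha>))" unfolding D_def by (simp add: field_simps)
    moreover have "(2 * \<alpha>)^2 * ((norm p)^2 / D) * ((norm q)^2 / D) = (2 * \<alpha> / D * norm p * norm q)^2"
      by (simp add: power_mult_distrib power_divide power2_eq_square)
    ultimately show ?thesis by simp
  qed
  finally have "\<bar>c * m\<bar> \<le> \<alpha> / (2 * (1 - \<alpha>)) * norm p * norm q"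
    using \<alpha> by (intro power2_le_imp_le[of "\<bar>c * m\<bar>", simplified]) auto
  then show ?thesis
    unfolding m_def a_def b_def resolvent_difference_eq[OF Sk psd c] .
qed

(* 9261/7180 = 441/359 * 21/20: the closeness produced by the net argument for epsilon = 21/20 tau. *)
lemma resolvent_factor_le:
  fixes \<tau> :: real
  assumes "0 < \<tau>" "\<tau> \<le> 1/4"
  defines "\<alpha> \<equiv> 9261/7180 * \<tau>"
  shows "0 \<le> \<alpha>" and "\<alpha> < 1" and "\<alpha> / (2 * (1 - \<alpha>)) \<le> \<tau>"
proof -
  show "0 \<le> \<alpha>" "\<alpha> < 1" unfolding \<alpha>_def using assms by auto
  have "\<tau> * \<tau> \<le> \<tau> * (1/4)" using assms by (intro mult_left_mono) auto
  moreover have "2 * \<tau> * (1 - \<alpha>) = 2 * \<tau> - 9261/3590 * (\<tau> * \<tau>)" unfolding \<alpha>_def by (simp add: algebra_simps)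
  ultimately have "\<alpha> \<le> 2 * \<tau> * (1 - \<alpha>)" unfolding \<alpha>_def using assms by linarith
  then show "\<alpha> / (2 * (1 - \<alpha>)) \<le> \<tau>" using \<open>\<alpha> < 1\<close> by (simp add: field_simps)
qed

lemma spec_norm_gram_le:
  fixes D :: "real^'r^'r" and w :: "nat \<Rightarrow> real^'r"
  assumes D: "\<And>p q. \<bar>p \<bullet> (D *v q)\<bar> \<le> \<beta> * norm p * norm q"
    and w: "\<And>i. norm (w i) \<le> K" and \<beta>: "\<beta> \<ge> 0"
  shows "spec_norm n (\<lambda>i j. w i \<bullet> (D *v w j)) \<le> real n * (\<beta> * K^2)"
  unfolding spec_norm_def
proof (rule cSup_least)
  show "{sqrt (\<Sum>i<n. (\<Sum>j<n. w i \<bullet> (D *v w j) * v j)^2) |v. (\<Sum>j<n. (v j)^2) \<le> 1} \<noteq> {}"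
    by (auto intro!: exI[of _ "\<lambda>_. 0"])
next
  fix z assume "z \<in> {sqrt (\<Sum>i<n. (\<Sum>j<n. w i \<bullet> (D *v w j) * v j)^2) |v. (\<Sum>j<n. (v j)^2) \<le> 1}"
  then obtain v where z: "z = sqrt (\<Sum>i<n. (\<Sum>j<n. w i \<bullet> (D *v w j) * v j)^2)"
    and v: "(\<Sum>j<n. (v j)^2) \<le> 1"
    by blast
  have K: "K \<ge> 0" using w[of 0] norm_ge_zero order_trans by blast
  define g where "g = (\<Sum>j<n. v j *\<^sub>R w j)"
  have "(\<Sum>j<n. \<bar>v j\<bar>)^2 \<le> (\<Sum>j<n. \<bar>v j\<bar>^2) * card {..<n}"
    by (rule sum_squared_le_sum_of_squares)
  also have "\<dots> \<le> real n" using mult_right_mono[OF v, of "real n"] by (simp add: power2_abs)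
  finally have sum_v: "(\<Sum>j<n. \<bar>v j\<bar>) \<le> sqrt n" by (rule real_le_rsqrt)
  have "norm g \<le> (\<Sum>j<n. \<bar>v j\<bar> * norm (w j))" unfolding g_def
    by (rule order_trans[OF norm_sum]) simp
  also have "\<dots> \<le> (\<Sum>j<n. \<bar>v j\<bar>) * K"
    unfolding sum_distrib_right using w by (intro sum_mono mult_left_mono) auto
  also have "\<dots> \<le> sqrt n * K" using sum_v K by (rule mult_right_mono)
  finally have g: "norm g \<le> sqrt n * K" .
  have row: "(\<Sum>j<n. w i \<bullet> (D *v w j) * v j)^2 \<le> (\<beta> * K^2 * sqrt n)^2" for i
  proof -
    have "\<bar>\<Sum>j<n. w i \<bullet> (D *v w j) * v j\<bar> = \<bar>w i \<bullet> (D *v g)\<bar>"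
      unfolding g_def by (simp add: matrix_vector_mult_sum inner_sum_right matrix_vector_mult_scaleR mult.commute)
    also have "\<dots> \<le> \<beta> * norm (w i) * norm g" by (rule D)
    also have "\<dots> \<le> \<beta> * K * (sqrt n * K)" using w[of i] g \<beta> K by (intro mult_mono mult_left_mono) auto
    finally show ?thesis
      by (intro power2_le_iff_abs_le[THEN iffD2]) (use \<beta> K in \<open>auto simp: power2_eq_square mult_ac\<close>)
  qed
  have sum: "(\<Sum>i<n. (\<beta> * K^2 * sqrt n)^2) = (real n * (\<beta> * K^2))^2"
    by (simp add: power_mult_distrib power2_eq_square)
  have "z \<le> sqrt (\<Sum>i<n. (\<beta> * K^2 * sqrt n)^2)" unfolding z by (intro real_sqrt_le_mono sum_mono row)
  also have "\<dots> = real n * (\<beta> * K^2)" unfolding sum using \<beta> by simp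
  finally show "z \<le> real n * (\<beta> * K^2)" .
qed

lemma spec_norm_pred_cov_diff_le:
  fixes S Sk SN :: "real^'r^'r" and \<phi> :: "'d \<Rightarrow> real^'r"
  assumes pd: "\<And>y. y \<noteq> 0 \<Longrightarrow> quad_form S y > 0"
    and Sk: "symmetric_matrix Sk" and SN: "symmetric_matrix SN" and \<alpha>: "0 \<le> \<alpha>" "\<alpha> < 1"
    and hk: "\<And>y. \<bar>quad_form Sk y - quad_form S y\<bar> \<le> \<alpha> * quad_form S y"
    and hN: "\<And>y. \<bar>quad_form SN y - quad_form S y\<bar> \<le> \<alpha> * quad_form S y"
    and sigma2: "sigma2 > 0" and K: "\<And>x. norm (\<phi> x) \<le> K"
  shows "spec_norm (length xs) (\<lambda>i j. pred_cov sigma2 N Sk \<phi> xs i j - pred_cov sigma2 N SN \<phi> xs i j)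
          \<le> real (length xs) * (\<alpha> / (2 * (1 - \<alpha>)) * K^2)"
proof -
  define c where "c = real N / sigma2"
  have c: "c \<ge> 0" unfolding c_def using sigma2 by simp
  define D where "D = matrix_inv (c *\<^sub>R Sk + mat 1) - matrix_inv (c *\<^sub>R SN + mat 1)"
  have "(\<lambda>i j. pred_cov sigma2 N Sk \<phi> xs i j - pred_cov sigma2 N SN \<phi> xs i j)
      = (\<lambda>i j. \<phi> (xs ! i) \<bullet> (D *v \<phi> (xs ! j)))"
    unfolding pred_cov_def D_def c_def by (simp add: matrix_vector_mult_diff_rdistrib inner_diff_right)
  moreover have "spec_norm (length xs) (\<lambda>i j. \<phi> (xs ! i) \<bullet> (D *v \<phi> (xs ! j)))
      \<le> real (length xs) * (\<alpha> / (2 * (1 - \<alpha>)) * K^2)"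
  proof (rule spec_norm_gram_le)
    show "\<bar>p \<bullet> (D *v q)\<bar> \<le> \<alpha> / (2 * (1 - \<alpha>)) * norm p * norm q" for p q
      using resolvent_difference_bound[OF pd Sk SN \<alpha> c hk hN, of p q] unfolding D_def
      by (simp add: matrix_vector_mult_diff_rdistrib inner_diff_right)
  qed (use K \<alpha> in auto)
  ultimately show ?thesis by simp
qed

lemma spec_norm_pred_cov_diff_le_rate:
  fixes S Sk SN :: "real^'r^'r" and \<phi> :: "'d \<Rightarrow> real^'r"
  assumes pd: "\<And>y. y \<noteq> 0 \<Longrightarrow> quad_form S y > 0"
    and Sk: "symmetric_matrix Sk" and SN: "symmetric_matrix SN" and \<tau>: "0 < \<tau>" "\<tau> \<le> 1/4"
    and hk: "\<And>y. \<bar>quad_form Sk y - quad_form S y\<bar> \<le> 9261/7180 * \<tau> * quad_form S y"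
    and hN: "\<And>y. \<bar>quad_form SN y - quad_form S y\<bar> \<le> 9261/7180 * \<tau> * quad_form S y"
    and sigma2: "sigma2 > 0" and K: "\<And>x. norm (\<phi> x) \<le> K"
  shows "spec_norm (length xs) (\<lambda>i j. pred_cov sigma2 N Sk \<phi> xs i j - pred_cov sigma2 N SN \<phi> xs i j)
          \<le> real (length xs) * (\<tau> * K^2)"
proof -
  note \<alpha> = resolvent_factor_le[OF \<tau>]
  have "spec_norm (length xs) (\<lambda>i j. pred_cov sigma2 N Sk \<phi> xs i j - pred_cov sigma2 N SN \<phi> xs i j)
      \<le> real (length xs) * (9261/7180 * \<tau> / (2 * (1 - 9261/7180 * \<tau>)) * K^2)"
    by (rule spec_norm_pred_cov_diff_le[OF pd Sk SN \<alpha>(1,2) hk hN sigma2 K])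
  also have "\<dots> \<le> real (length xs) * (\<tau> * K^2)" using \<alpha>(3) by (intro mult_left_mono mult_right_mono) auto
  finally show ?thesis .
qed

section \<open>Nets for the unit sphere of a quadratic form\<close>

definition grid :: "real \<Rightarrow> nat \<Rightarrow> (real^'n) set" where
  "grid h m = vec_lambda ` (PiE UNIV (\<lambda>_. (\<lambda>j::int. h * of_int j) ` {- int m..int m}))"

lemma finite_grid: "finite (grid h m)"
  unfolding grid_def by (simp add: finite_PiE)

lemma card_grid_le: "card (grid h m :: (real^'n) set) \<le> (2 * m + 1) ^ CARD('n)"
proof -
  let ?C = "(\<lambda>j::int. h * of_int j) ` {- int m..int m}"
  have "card (grid h m :: (real^'n) set) \<le> card (PiE (UNIV::'n set) (\<lambda>_. ?C))"
    unfolding grid_def by (rule card_image_le) (simp add: finite_PiE)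
  also have "\<dots> = card ?C ^ CARD('n)" by (simp add: card_PiE)
  also have "\<dots> \<le> (2 * m + 1) ^ CARD('n)"
    using card_image_le[of "{- int m..int m}" "\<lambda>j::int. h * of_int j"] by (intro power_mono) auto
  finally show ?thesis .
qed

lemma grid_approx:
  fixes u :: "real^'n" and h :: real
  assumes h: "h > 0" and u: "norm u \<le> h * real m"
  shows "\<exists>v\<in>grid h m. (norm (u - v))^2 \<le> real CARD('n) * h^2 / 4"
proof -
  define j where "j i = round (u$i / h)" for i
  have "j i \<in> {- int m..int m}" for i
  proof -
    have "\<bar>u$i / h\<bar> \<le> real m"
      using order_trans[OF component_le_norm_cart u] h by (simp add: abs_div divide_le_eq mult.commute)
    then have "- real m \<le> u$i / h" "u$i / h \<le> real m" by linarith+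
    then have "round (- real m) \<le> j i" "j i \<le> round (real m)"
      unfolding j_def by (simp_all only: round_mono)
    moreover have "round (- real m) = - int m" "round (real m) = int m"
      by (metis of_int_minus of_int_of_nat_eq round_of_int)+
    ultimately show ?thesis by simp
  qed
  then have "(\<chi> i. h * of_int (j i)) \<in> grid h m"
    unfolding grid_def PiE_UNIV_domain by (intro imageI) auto
  moreover have "(norm (u - (\<chi> i. h * of_int (j i))))^2 \<le> real CARD('n) * h^2 / 4"
  proof -
    have "((u - (\<chi> i. h * of_int (j i)))$i)^2 \<le> (h / 2)^2" for i
    proof -
      have "(u - (\<chi> i. h * of_int (j i)))$i = h * (u$i / h - of_int (round (u$i / h)))"
        unfolding j_def using h by (simp add: algebra_simps)
      then have "\<bar>(u - (\<chi> i. h * of_int (j i)))$i\<bar> \<le> h / 2"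
        using of_int_round_abs_le[of "u$i / h"] h by (simp add: abs_mult abs_minus_commute)
      then show ?thesis by (metis abs_ge_zero power2_abs power_mono)
    qed
    then have "(\<Sum>i\<in>UNIV. ((u - (\<chi> i. h * of_int (j i)))$i)^2) \<le> CARD('n) * (h / 2)^2"
      using sum_mono[of UNIV "\<lambda>i. ((u - (\<chi> i. h * of_int (j i)))$i)^2" "\<lambda>_. (h / 2)^2"] by simp
    then show ?thesis by (simp add: norm_vec_def L2_set_def sum_nonneg power_divide)
  qed
  ultimately show ?thesis by blast
qed

lemma quad_form_sphere_net:
  fixes S :: "real^'n^'n"
  assumes lam: "lam > 0" and lower: "\<And>y. lam * (norm y)^2 \<le> quad_form S y"
    and upper: "\<And>y. quad_form S y \<le> K2 * (norm y)^2" and K2: "K2 > 0" and \<nu>: "\<nu> > 0"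
  shows "\<exists>G. finite G \<and> card G \<le> (2 * nat \<lceil>sqrt (real CARD('n) * K2 / lam) / (2 * \<nu>)\<rceil> + 1) ^ CARD('n)
           \<and> (\<forall>u. quad_form S u = 1 \<longrightarrow> (\<exists>v\<in>G. quad_form S (u - v) \<le> \<nu>^2))"
proof (intro exI conjI allI impI)
  define h where "h = 2 * \<nu> / sqrt (K2 * CARD('n))"
  define m where "m = nat \<lceil>sqrt (real CARD('n) * K2 / lam) / (2 * \<nu>)\<rceil>"
  have h: "h > 0" unfolding h_def using \<nu> K2 by simp
  have hm: "1 / sqrt lam \<le> h * real m"
  proof -
    have "1 / sqrt lam = h * (sqrt (real CARD('n) * K2 / lam) / (2 * \<nu>))"
      unfolding h_def using \<nu> K2 lam by (simp add: real_sqrt_divide real_sqrt_mult field_simps)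
    also have "\<dots> \<le> h * real m" unfolding m_def using h by (intro mult_left_mono real_nat_ceiling_ge) auto
    finally show ?thesis .
  qed
  show "finite (grid h m :: (real^'n) set)" by (rule finite_grid)
  show "card (grid h m :: (real^'n) set) \<le> (2 * nat \<lceil>sqrt (real CARD('n) * K2 / lam) / (2 * \<nu>)\<rceil> + 1) ^ CARD('n)"
    unfolding m_def[symmetric] by (rule card_grid_le)
  fix u assume u: "quad_form S u = 1"
  have "(norm u)^2 \<le> (1 / sqrt lam)^2"
    using lower[of u] lam by (simp add: u power_divide field_simps)
  then have "norm u \<le> h * real m" using hm by (smt (verit) power2_le_imp_le real_sqrt_ge_zero lam divide_nonneg_nonneg)
  then obtain v where v: "v \<in> grid h m" "(norm (u - v))^2 \<le> real CARD('n) * h^2 / 4"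
    using grid_approx[OF h] by blast
  have "quad_form S (u - v) \<le> K2 * (real CARD('n) * h^2 / 4)"
    using upper[of "u - v"] mult_left_mono[OF v(2), of K2] K2 by linarith
  also have "\<dots> = \<nu>^2" unfolding h_def using K2 by (simp add: power_divide power_mult_distrib field_simps)
  finally show "\<exists>v\<in>grid h m. quad_form S (u - v) \<le> \<nu>^2" using v(1) by blast
qed

lemma net_size_le:
  fixes q :: real and r :: nat
  assumes r: "r \<ge> 1" and q: "real r \<le> q"
  shows "real (2 * nat \<lceil>sqrt (real r * q) / (2 * (1/20))\<rceil> + 1) \<le> 23 * q"
proof -
  have q1: "q \<ge> 1" using r q by linarith
  have "sqrt (real r * q) \<le> sqrt (q * q)" using q q1 by (intro real_sqrt_le_mono mult_right_mono) auto
  then have "sqrt (real r * q) / (2 * (1/20)) \<le> 10 * q" using q1 by simp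
  moreover have "real (nat \<lceil>sqrt (real r * q) / (2 * (1/20))\<rceil>) = of_int \<lceil>sqrt (real r * q) / (2 * (1/20))\<rceil>"
    using q1 by simp
  ultimately have "real (nat \<lceil>sqrt (real r * q) / (2 * (1/20))\<rceil>) \<le> 10 * q + 1"
    using of_int_ceiling_le_add_one[of "sqrt (real r * q) / (2 * (1/20))"] by linarith
  then show ?thesis using q1 by simp
qed

lemma quad_form_net_step:
  assumes X: "symmetric_matrix X" and S: "symmetric_matrix S" and pd: "\<And>y. y \<noteq> 0 \<Longrightarrow> quad_form S y > 0"
    and a: "\<And>y. \<bar>quad_form X y\<bar> \<le> a * quad_form S y" "a \<ge> 0"
    and u: "quad_form S u = 1" and uv: "quad_form S (u - v) \<le> \<nu>^2" and \<nu>: "\<nu> \<ge> 0"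
    and v: "\<bar>quad_form X v\<bar> \<le> \<epsilon> * quad_form S v" and \<epsilon>: "\<epsilon> \<ge> 0"
  shows "\<bar>quad_form X u\<bar> \<le> \<epsilon> * (1 + \<nu>)^2 + a * (\<nu> * (2 + \<nu>))"
proof -
  have q0: "quad_form S y \<ge> 0" for y by (rule quad_form_nonneg_of_pos_def[OF pd])
  have d: "sqrt (quad_form S (u - v)) \<le> \<nu>" using uv \<nu> by (simp add: real_sqrt_le_iff real_le_lsqrt)
  have "quad_form S (v - u) = quad_form S (u - v)" using quad_form_uminus[of S "u - v"] by simp
  then have "sqrt (quad_form S v) \<le> sqrt (quad_form S u) + sqrt (quad_form S (u - v))"
    using sqrt_quad_form_triangle[OF S pd, of u "v - u"] by simp
  then have sv: "sqrt (quad_form S v) \<le> 1 + \<nu>" using u d by simp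
  have "sqrt (quad_form S (u + v)) \<le> sqrt (quad_form S u) + sqrt (quad_form S v)"
    by (rule sqrt_quad_form_triangle[OF S pd])
  then have suv: "sqrt (quad_form S (u + v)) \<le> 2 + \<nu>" using u sv by simp
  have "((u - v) \<bullet> (X *v (u + v)))^2 \<le> a^2 * quad_form S (u - v) * quad_form S (u + v)"
    by (rule bilinear_sq_le_of_quad_form_le[OF X a pd])
  then have "\<bar>(u - v) \<bullet> (X *v (u + v))\<bar> \<le> a * (sqrt (quad_form S (u - v)) * sqrt (quad_form S (u + v)))"
  proof -
    assume h: "((u - v) \<bullet> (X *v (u + v)))^2 \<le> a^2 * quad_form S (u - v) * quad_form S (u + v)"
    have "\<bar>(u - v) \<bullet> (X *v (u + v))\<bar> = sqrt (((u - v) \<bullet> (X *v (u + v)))^2)" by simp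
    also have "\<dots> \<le> sqrt (a^2 * quad_form S (u - v) * quad_form S (u + v))" using h by (rule real_sqrt_le_mono)
    also have "\<dots> = a * (sqrt (quad_form S (u - v)) * sqrt (quad_form S (u + v)))"
      using a(2) by (simp add: real_sqrt_mult)
    finally show ?thesis .
  qed
  also have "\<dots> \<le> a * (\<nu> * (2 + \<nu>))"
    using d suv a(2) \<nu> q0[of "u + v"] by (intro mult_left_mono mult_mono) auto
  finally have 2: "\<bar>(u - v) \<bullet> (X *v (u + v))\<bar> \<le> a * (\<nu> * (2 + \<nu>))" .
  have "quad_form S v \<le> (1 + \<nu>)^2" using sv by (rule sqrt_le_D)
  then have 1: "\<bar>quad_form X v\<bar> \<le> \<epsilon> * (1 + \<nu>)^2" using v \<epsilon> by (meson mult_left_mono order_trans)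
  show ?thesis using quad_form_diff_eq[OF X, of u v] 1 2 by linarith
qed

lemma relative_quad_form_bound_from_net:
  assumes X: "symmetric_matrix X" and S: "symmetric_matrix S" and pd: "\<And>y. y \<noteq> 0 \<Longrightarrow> quad_form S y > 0"
    and crude: "\<And>y. \<bar>quad_form X y\<bar> \<le> B * quad_form S y"
    and net: "\<And>u. quad_form S u = 1 \<Longrightarrow> \<exists>v\<in>G. quad_form S (u - v) \<le> \<nu>^2"
    and \<nu>: "\<nu> \<ge> 0" "2 * \<nu> + \<nu>^2 < 1"
    and on_net: "\<And>v. v \<in> G \<Longrightarrow> \<bar>quad_form X v\<bar> \<le> \<epsilon> * quad_form S v" and \<epsilon>: "\<epsilon> \<ge> 0"
  shows "\<bar>quad_form X y\<bar> \<le> \<epsilon> * (1 + \<nu>)^2 / (1 - 2 * \<nu> - \<nu>^2) * quad_form S y"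
proof -
  have q0: "quad_form S y \<ge> 0" for y by (rule quad_form_nonneg_of_pos_def[OF pd])
  define U where "U = {u. quad_form S u = 1}"
  define a where "a = (SUP u\<in>U. \<bar>quad_form X u\<bar>)"
  have normalize: "quad_form S ((1 / sqrt (quad_form S y)) *\<^sub>R y) = 1"
    "quad_form X ((1 / sqrt (quad_form S y)) *\<^sub>R y) = quad_form X y / quad_form S y" if "y \<noteq> 0" for y
    using pd[OF that] by (simp_all add: quad_form_scaleR power_divide)
  obtain y0 :: "real^'n" where "y0 \<noteq> 0" using vector_choose_size[of 1] by fastforce
  then have U: "U \<noteq> {}" using normalize unfolding U_def by blast
  have "bdd_above ((\<lambda>u. \<bar>quad_form X u\<bar>) ` U)"
    using crude by (intro bdd_aboveI[where M = B]) (auto simp: U_def, metis mult.right_neutral)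
  then have le_a: "\<bar>quad_form X u\<bar> \<le> a" if "u \<in> U" for u
    unfolding a_def using that by (intro cSup_upper) auto
  have a0: "a \<ge> 0" using le_a U by (meson abs_ge_zero all_not_in_conv order_trans)
  have homog: "\<bar>quad_form X y\<bar> \<le> a * quad_form S y" for y
  proof (cases "y = 0")
    case False
    then have "\<bar>quad_form X y / quad_form S y\<bar> \<le> a" using le_a normalize unfolding U_def by fastforce
    then show ?thesis using pd[OF False] by (simp add: abs_div field_simps)
  qed simp
  have "a \<le> \<epsilon> * (1 + \<nu>)^2 + a * (\<nu> * (2 + \<nu>))"
    unfolding a_def
  proof (rule cSup_least)
    fix z assume "z \<in> (\<lambda>u. \<bar>quad_form X u\<bar>) ` U"
    then obtain u where u: "quad_form S u = 1" and z: "z = \<bar>quad_form X u\<bar>" unfolding U_def by blast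
    obtain v where "v \<in> G" "quad_form S (u - v) \<le> \<nu>^2" using net[OF u] by blast
    then show "z \<le> \<epsilon> * (1 + \<nu>)^2 + (SUP u\<in>U. \<bar>quad_form X u\<bar>) * (\<nu> * (2 + \<nu>))"
      unfolding z a_def[symmetric] using quad_form_net_step[OF X S pd homog a0 u _ \<nu>(1) on_net \<epsilon>] by blast
  qed (use U in simp)
  then have "a * (1 - 2 * \<nu> - \<nu>^2) \<le> \<epsilon> * (1 + \<nu>)^2" by (simp add: algebra_simps power2_eq_square)
  then have "a \<le> \<epsilon> * (1 + \<nu>)^2 / (1 - 2 * \<nu> - \<nu>^2)" using \<nu> by (simp add: field_simps)
  then show ?thesis using homog[of y] q0[of y] by (meson mult_right_mono order_trans)
qed

section \<open>Multiplicative Chernoff bounds on product spaces\<close>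

lemma chernoff_rate_upper_ge:
  fixes e :: real
  assumes "0 \<le> e" "e \<le> 1/3"
  shows "e^2 / 3 \<le> (1 + e) * ln (1 + e) - e"
proof -
  define f where "f x = (1 + x) * ln (1 + x) - x - x^2 / 3" for x :: real
  have "f 0 \<le> f e"
  proof (rule DERIV_nonneg_imp_nondecreasing[OF assms(1)])
    fix x :: real assume x: "0 \<le> x" "x \<le> e"
    have d: "DERIV f x :> ln (1 + x) - 2 * x / 3"
      unfolding f_def using x by (auto intro!: derivative_eq_intros simp: divide_simps)
    have "x - x^2 \<le> ln (1 + x)" using x assms by (intro ln_one_plus_pos_lower_bound) auto
    moreover have "x * (3 * x) \<le> x * 1" using x assms by (intro mult_left_mono) auto
    ultimately show "\<exists>y. DERIV f x :> y \<and> 0 \<le> y"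
      using d by (intro exI[of _ "ln (1 + x) - 2 * x / 3"]) (auto simp: power2_eq_square)
  qed
  then show ?thesis unfolding f_def by simp
qed

lemma chernoff_rate_lower_ge:
  fixes e :: real
  assumes "0 \<le> e" "e \<le> 1/3"
  shows "e^2 / 3 \<le> (1 - e) * ln (1 - e) + e"
proof -
  define f where "f x = (1 - x) * ln (1 - x) + x - x^2 / 3" for x :: real
  have "f 0 \<le> f e"
  proof (rule DERIV_nonneg_imp_nondecreasing[OF assms(1)])
    fix x :: real assume x: "0 \<le> x" "x \<le> e"
    have d: "DERIV f x :> - ln (1 - x) - 2 * x / 3"
      unfolding f_def using x assms by (auto intro!: derivative_eq_intros simp: divide_simps)
    have "ln (1 - x) \<le> (1 - x) - 1" using x assms by (intro ln_le_minus_one) auto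
    then show "\<exists>y. DERIV f x :> y \<and> 0 \<le> y" using d x by (intro exI[of _ "- ln (1 - x) - 2 * x / 3"]) auto
  qed
  then show ?thesis unfolding f_def by simp
qed

lemma nn_integral_exp_bounded_le:
  assumes P: "prob_space P" and g: "g \<in> borel_measurable P"
    and g0: "\<And>y. 0 \<le> g y" and gb: "\<And>y. g y \<le> b" and b: "b > 0"
  shows "(\<integral>\<^sup>+y. ennreal (exp (l * g y)) \<partial>P) \<le> ennreal (exp (integral\<^sup>L P g * ((exp (l * b) - 1) / b)))"
proof -
  interpret prob_space P by (rule P)
  define C where "C = (exp (l * b) - 1) / b"
  \<comment> \<open>convexity of \<open>exp\<close> on the chord between \<open>0\<close> and \<open>l * b\<close>\<close>
  have chord: "exp (l * g y) \<le> 1 + g y * C" for y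
  proof -
    have "exp (l * g y) = exp ((g y / b) * (l * b))" using b by simp
    also have "\<dots> \<le> 1 - g y / b + g y / b * exp (l * b)"
      using convex_onD[OF exp_convex, of "g y / b" 0 "l * b"] g0[of y] gb[of y] b by simp
    also have "\<dots> = 1 + g y * C" unfolding C_def using b by (simp add: field_simps)
    finally show ?thesis .
  qed
  have ig: "integrable P g"
    by (rule integrable_const_bound[where B = b]) (use g0 gb g in auto)
  have "(\<integral>\<^sup>+y. ennreal (exp (l * g y)) \<partial>P) \<le> (\<integral>\<^sup>+y. ennreal (1 + g y * C) \<partial>P)"
    by (intro nn_integral_mono ennreal_leI chord)
  also have "\<dots> = ennreal (\<integral>y. 1 + g y * C \<partial>P)"
    using ig chord by (intro nn_integral_eq_integral AE_I2) (auto intro: order_trans[OF less_imp_le[OF exp_gt_zero]])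
  also have "(\<integral>y. 1 + g y * C \<partial>P) = 1 + integral\<^sup>L P g * C"
    using ig by (simp add: prob_space)
  also have "ennreal (1 + integral\<^sup>L P g * C) \<le> ennreal (exp (integral\<^sup>L P g * C))"
    by (intro ennreal_leI) (metis add.commute exp_ge_add_one_self)
  finally show ?thesis unfolding C_def .
qed

lemma borel_measurable_sum_components_PiM:
  assumes g: "g \<in> borel_measurable P" and J: "J \<subseteq> I"
  shows "(\<lambda>x. \<Sum>j\<in>J. g (x j) :: real) \<in> borel_measurable (PiM I (\<lambda>_. P))"
proof (intro borel_measurable_sum)
  fix j assume "j \<in> J"
  then have "j \<in> I" using J by auto
  then show "(\<lambda>x. g (x j)) \<in> borel_measurable (PiM I (\<lambda>_. P))"
    using measurable_compose[OF measurable_component_singleton[of j I "\<lambda>_. P"] g] by simp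
qed

lemma nn_integral_exp_sum_PiM:
  assumes P: "prob_space P" and I: "finite I" and J: "J \<subseteq> I" and F: "F \<in> borel_measurable P"
  shows "(\<integral>\<^sup>+x. ennreal (exp (\<Sum>j\<in>J. F (x j))) \<partial>PiM I (\<lambda>_. P)) = (\<integral>\<^sup>+y. ennreal (exp (F y)) \<partial>P) ^ card J"
proof -
  interpret product_sigma_finite "\<lambda>_. P"
    unfolding product_sigma_finite_def using P by (simp add: prob_space_imp_sigma_finite)
  define G where "G i y = (if i \<in> J then ennreal (exp (F y)) else 1)" for i y
  have fJ: "finite J" using I J finite_subset by blast
  have restrict: "(\<Prod>i\<in>I. if i \<in> J then f i else 1) = (\<Prod>i\<in>J. f i)" for f :: "_ \<Rightarrow> ennreal"
    using prod.If_cases[OF I, of "\<lambda>i. i \<in> J" f "\<lambda>_. 1"] J by (simp add: Int_absorb1 Int_commute)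
  have "(\<integral>\<^sup>+x. ennreal (exp (\<Sum>j\<in>J. F (x j))) \<partial>PiM I (\<lambda>_. P)) = (\<integral>\<^sup>+x. (\<Prod>i\<in>I. G i (x i)) \<partial>PiM I (\<lambda>_. P))"
    unfolding G_def restrict by (simp add: prod_ennreal exp_sum fJ)
  also have "\<dots> = (\<Prod>i\<in>I. integral\<^sup>N P (G i))"
    using F by (intro product_nn_integral_prod[OF I]) (auto simp: G_def)
  also have "\<dots> = (\<Prod>i\<in>J. (\<integral>\<^sup>+y. ennreal (exp (F y)) \<partial>P))"
    using prob_space.emeasure_space_1[OF P] unfolding G_def restrict[symmetric]
    by (intro prod.cong) auto
  finally show ?thesis by simp
qed

lemma nn_integral_exp_sum_PiM_le:
  assumes P: "prob_space P" and I: "finite I" and J: "J \<subseteq> I"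
    and g: "g \<in> borel_measurable P" and g0: "\<And>y. 0 \<le> g y" and gb: "\<And>y. g y \<le> b" and b: "b > 0"
  defines "M \<equiv> PiM I (\<lambda>_. P)"
  shows "(\<integral>\<^sup>+x. ennreal (exp (l * (\<Sum>j\<in>J. g (x j)))) * indicator (space M) x \<partial>M)
      \<le> ennreal (exp (real (card J) * (integral\<^sup>L P g * ((exp (l * b) - 1) / b))))"
proof -
  have "(\<integral>\<^sup>+x. ennreal (exp (l * (\<Sum>j\<in>J. g (x j)))) * indicator (space M) x \<partial>M)
      = (\<integral>\<^sup>+x. ennreal (exp (\<Sum>j\<in>J. l * g (x j))) \<partial>M)"
    by (intro nn_integral_cong) (simp add: sum_distrib_left)
  also have "\<dots> = (\<integral>\<^sup>+y. ennreal (exp (l * g y)) \<partial>P) ^ card J"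
    unfolding M_def by (rule nn_integral_exp_sum_PiM[OF P I J]) (use g in simp)
  also have "\<dots> \<le> ennreal (exp (integral\<^sup>L P g * ((exp (l * b) - 1) / b))) ^ card J"
    by (intro power_mono nn_integral_exp_bounded_le[OF P g g0 gb b]) simp
  also have "\<dots> = ennreal (exp (real (card J) * (integral\<^sup>L P g * ((exp (l * b) - 1) / b))))"
    by (subst exp_of_nat_mult) (simp add: ennreal_power)
  finally show ?thesis .
qed

lemma chernoff_PiM_upper:
  assumes P: "prob_space P" and I: "finite I" and J: "J \<subseteq> I"
    and g: "g \<in> borel_measurable P" and g0: "\<And>y. 0 \<le> g y" and gb: "\<And>y. g y \<le> b" and b: "b > 0"
    and \<epsilon>: "\<epsilon> > 0"
  defines "\<mu> \<equiv> integral\<^sup>L P g" and "M \<equiv> PiM I (\<lambda>_. P)"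
  shows "measure M {x\<in>space M. (1 + \<epsilon>) * (real (card J) * \<mu>) \<le> (\<Sum>j\<in>J. g (x j))}
           \<le> exp (- (real (card J) * \<mu> / b * ((1 + \<epsilon>) * ln (1 + \<epsilon>) - \<epsilon>)))"
proof -
  interpret prob_space M unfolding M_def by (intro prob_space_PiM) (use P in auto)
  have [measurable]: "(\<lambda>x. \<Sum>j\<in>J. g (x j)) \<in> borel_measurable M"
    unfolding M_def by (rule borel_measurable_sum_components_PiM[OF g J])
  define s where "s = ln (1 + \<epsilon>) / b"
  have s: "s > 0" unfolding s_def using \<epsilon> b by simp
  define a where "a = (1 + \<epsilon>) * (real (card J) * \<mu>)"
  have "emeasure M {x\<in>space M. a \<le> (\<Sum>j\<in>J. g (x j))}
      \<le> ennreal (exp (-s * a)) * (\<integral>\<^sup>+x. ennreal (exp (s * (\<Sum>j\<in>J. g (x j)))) * indicator (space M) x \<partial>M)"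
    by (rule Chernoff_ineq_nn_integral_ge[OF s]) measurable
  also have "\<dots> \<le> ennreal (exp (-s * a)) * ennreal (exp (real (card J) * (\<mu> * ((exp (s * b) - 1) / b))))"
    unfolding M_def \<mu>_def by (intro mult_left_mono nn_integral_exp_sum_PiM_le[OF P I J g g0 gb b]) simp
  also have "\<dots> = ennreal (exp (- (real (card J) * \<mu> / b * ((1 + \<epsilon>) * ln (1 + \<epsilon>) - \<epsilon>))))"
    unfolding s_def a_def using b \<epsilon>
    by (simp add: ennreal_mult[symmetric] exp_add[symmetric] field_simps)
  finally show ?thesis unfolding a_def by (simp add: emeasure_eq_measure)
qed

lemma chernoff_PiM_lower:
  assumes P: "prob_space P" and I: "finite I" and J: "J \<subseteq> I"
    and g: "g \<in> borel_measurable P" and g0: "\<And>y. 0 \<le> g y" and gb: "\<And>y. g y \<le> b" and b: "b > 0"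
    and \<epsilon>: "0 < \<epsilon>" "\<epsilon> < 1"
  defines "\<mu> \<equiv> integral\<^sup>L P g" and "M \<equiv> PiM I (\<lambda>_. P)"
  shows "measure M {x\<in>space M. (\<Sum>j\<in>J. g (x j)) \<le> (1 - \<epsilon>) * (real (card J) * \<mu>)}
           \<le> exp (- (real (card J) * \<mu> / b * ((1 - \<epsilon>) * ln (1 - \<epsilon>) + \<epsilon>)))"
proof -
  interpret prob_space M unfolding M_def by (intro prob_space_PiM) (use P in auto)
  have [measurable]: "(\<lambda>x. \<Sum>j\<in>J. g (x j)) \<in> borel_measurable M"
    unfolding M_def by (rule borel_measurable_sum_components_PiM[OF g J])
  define s where "s = - ln (1 - \<epsilon>) / b"
  have s: "s > 0" unfolding s_def using \<epsilon> b by (simp add: field_simps)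
  define a where "a = (1 - \<epsilon>) * (real (card J) * \<mu>)"
  have "emeasure M {x\<in>space M. (\<Sum>j\<in>J. g (x j)) \<le> a}
      \<le> ennreal (exp (s * a)) * (\<integral>\<^sup>+x. ennreal (exp (-s * (\<Sum>j\<in>J. g (x j)))) * indicator (space M) x \<partial>M)"
    by (rule Chernoff_ineq_nn_integral_le[OF s]) measurable
  also have "\<dots> \<le> ennreal (exp (s * a)) * ennreal (exp (real (card J) * (\<mu> * ((exp (-s * b) - 1) / b))))"
    unfolding M_def \<mu>_def by (intro mult_left_mono nn_integral_exp_sum_PiM_le[OF P I J g g0 gb b]) simp
  also have "\<dots> = ennreal (exp (- (real (card J) * \<mu> / b * ((1 - \<epsilon>) * ln (1 - \<epsilon>) + \<epsilon>))))"
    unfolding s_def a_def using b \<epsilon>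
    by (simp add: ennreal_mult[symmetric] exp_add[symmetric] field_simps)
  finally show ?thesis unfolding a_def by (simp add: emeasure_eq_measure)
qed

lemma chernoff_PiM_mean_deviation:
  assumes P: "prob_space P" and I: "finite I" and J: "J \<subseteq> I" "J \<noteq> {}"
    and g: "g \<in> borel_measurable P" and g0: "\<And>y. 0 \<le> g y" and gb: "\<And>y. g y \<le> b" and b: "b > 0"
    and \<epsilon>: "0 < \<epsilon>" "\<epsilon> \<le> 1/3"
  defines "\<mu> \<equiv> integral\<^sup>L P g" and "M \<equiv> PiM I (\<lambda>_. P)"
  shows "measure M {x\<in>space M. \<not> \<bar>(\<Sum>j\<in>J. g (x j)) / real (card J) - \<mu>\<bar> \<le> \<epsilon> * \<mu>}
           \<le> 2 * exp (- (real (card J) * \<mu> * \<epsilon>^2 / (3 * b)))"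
proof -
  interpret prob_space M unfolding M_def by (intro prob_space_PiM) (use P in auto)
  have [measurable]: "(\<lambda>x. \<Sum>j\<in>J. g (x j)) \<in> borel_measurable M"
    unfolding M_def by (rule borel_measurable_sum_components_PiM[OF g J(1)])
  have n: "real (card J) > 0" using J I by (simp add: card_gt_0_iff finite_subset)
  have "\<mu> \<ge> 0" unfolding \<mu>_def using g0 by simp
  then have weaken: "exp (- (real (card J) * \<mu> / b * r)) \<le> exp (- (real (card J) * \<mu> * \<epsilon>^2 / (3 * b)))"
    if "\<epsilon>^2 / 3 \<le> r" for r
    using that n b by (simp add: mult_left_mono divide_right_mono mult_nonneg_nonneg field_simps)
  define Up where "Up = {x\<in>space M. (1 + \<epsilon>) * (real (card J) * \<mu>) \<le> (\<Sum>j\<in>J. g (x j))}"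
  define Lo where "Lo = {x\<in>space M. (\<Sum>j\<in>J. g (x j)) \<le> (1 - \<epsilon>) * (real (card J) * \<mu>)}"
  have "{x\<in>space M. \<not> \<bar>(\<Sum>j\<in>J. g (x j)) / real (card J) - \<mu>\<bar> \<le> \<epsilon> * \<mu>} \<subseteq> Up \<union> Lo"
    unfolding Up_def Lo_def using n by (auto simp: abs_le_iff field_simps)
  then have "measure M {x\<in>space M. \<not> \<bar>(\<Sum>j\<in>J. g (x j)) / real (card J) - \<mu>\<bar> \<le> \<epsilon> * \<mu>}
      \<le> measure M Up + measure M Lo"
    unfolding Up_def Lo_def by (intro order_trans[OF finite_measure_mono measure_Un_le]) auto
  also have "\<dots> \<le> 2 * exp (- (real (card J) * \<mu> * \<epsilon>^2 / (3 * b)))"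
  proof -
    have "measure M Up \<le> exp (- (real (card J) * \<mu> / b * ((1 + \<epsilon>) * ln (1 + \<epsilon>) - \<epsilon>)))"
      unfolding Up_def M_def \<mu>_def using \<epsilon> by (intro chernoff_PiM_upper[OF P I J(1) g g0 gb b]) simp
    moreover have "measure M Lo \<le> exp (- (real (card J) * \<mu> / b * ((1 - \<epsilon>) * ln (1 - \<epsilon>) + \<epsilon>)))"
      unfolding Lo_def M_def \<mu>_def using \<epsilon> by (intro chernoff_PiM_lower[OF P I J(1) g g0 gb b]) auto
    ultimately show ?thesis
      using weaken[OF chernoff_rate_upper_ge[OF less_imp_le[OF \<epsilon>(1)] \<epsilon>(2)]]
        weaken[OF chernoff_rate_lower_ge[OF less_imp_le[OF \<epsilon>(1)] \<epsilon>(2)]] by linarith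
  qed
  finally show ?thesis .
qed

section \<open>Population and empirical second moments\<close>

lemma borel_measurable_vec_component [measurable_dest]:
  "f \<in> borel_measurable M \<Longrightarrow> (\<lambda>x. f x $ i) \<in> borel_measurable M" for f :: "_ \<Rightarrow> real^'n"
  using measurable_compose[OF _ borel_measurable_continuous_onI[OF linear_continuous_on[OF bounded_linear_vec_nth]]] .

lemma borel_measurable_matrix_vector_mult:
  "f \<in> borel_measurable M \<Longrightarrow> (\<lambda>x. A *v f x) \<in> borel_measurable M" for A :: "real^'n^'m"
  using measurable_compose[OF _ borel_measurable_continuous_onI[OF linear_continuous_on[OF matrix_vector_mul_bounded_linear]]] .

lemma sq_inner_le:
  fixes a v :: "'a::real_inner"
  assumes "norm a \<le> K"
  shows "(a \<bullet> v)^2 \<le> K^2 * (norm v)^2"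
proof -
  have "\<bar>a \<bullet> v\<bar> \<le> K * norm v"
    using Cauchy_Schwarz_ineq2[of a v] assms by (meson mult_right_mono norm_ge_zero order_trans)
  then show ?thesis by (metis abs_ge_zero power2_abs power_mono power_mult_distrib)
qed

lemma quad_form_second_moment:
  fixes \<phi> :: "'d \<Rightarrow> real^'r"
  assumes P: "prob_space P" and \<phi>: "\<phi> \<in> borel_measurable P" and K: "\<And>x. norm (\<phi> x) \<le> K"
  shows "quad_form (second_moment P \<phi>) v = (\<integral>y. (\<phi> y \<bullet> v)^2 \<partial>P)"
proof -
  interpret prob_space P by (rule P)
  have "integrable P (\<lambda>y. \<phi> y $ i * \<phi> y $ j)" for i j
  proof (rule integrable_const_bound[where B = "K * K"])
    have "\<bar>\<phi> y $ i\<bar> \<le> K" "\<bar>\<phi> y $ j\<bar> \<le> K" for y using component_le_norm_cart K order_trans by blast+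
    then show "AE y in P. norm (\<phi> y $ i * \<phi> y $ j) \<le> K * K"
      by (intro AE_I2) (simp add: abs_mult mult_mono')
  qed (use \<phi> in measurable)
  then have "quad_form (second_moment P \<phi>) v = (\<integral>y. (\<Sum>i\<in>UNIV. \<Sum>j\<in>UNIV. v $ i * v $ j * (\<phi> y $ i * \<phi> y $ j)) \<partial>P)"
    by (simp add: quad_form_def second_moment_def inner_vec_def matrix_vector_mult_def sum_distrib_left
        mult_ac)
  also have "\<dots> = (\<integral>y. (\<phi> y \<bullet> v)^2 \<partial>P)"
    by (simp add: inner_vec_def power2_eq_square sum_product mult_ac)
  finally show ?thesis .
qed

lemma integrable_sq_inner:
  fixes \<phi> :: "'d \<Rightarrow> real^'r"
  assumes P: "prob_space P" and \<phi>: "\<phi> \<in> borel_measurable P" and K: "\<And>x. norm (\<phi> x) \<le> K"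
  shows "integrable P (\<lambda>y. (\<phi> y \<bullet> v)^2)"
proof -
  interpret prob_space P by (rule P)
  show ?thesis
    using sq_inner_le[OF K] \<phi> by (intro integrable_const_bound[where B = "K^2 * (norm v)^2"] AE_I2) auto
qed

lemma quad_form_second_moment_le:
  fixes \<phi> :: "'d \<Rightarrow> real^'r"
  assumes P: "prob_space P" and \<phi>: "\<phi> \<in> borel_measurable P" and K: "\<And>x. norm (\<phi> x) \<le> K"
  shows "quad_form (second_moment P \<phi>) v \<le> K^2 * (norm v)^2"
proof -
  interpret prob_space P by (rule P)
  have "(\<integral>y. (\<phi> y \<bullet> v)^2 \<partial>P) \<le> (\<integral>y. K^2 * (norm v)^2 \<partial>P)"
    using sq_inner_le[OF K] by (intro integral_mono integrable_sq_inner[OF P \<phi> K]) auto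
  then show ?thesis by (simp add: quad_form_second_moment[OF P \<phi> K] prob_space)
qed

lemma card_mult_lambda_min_second_moment_le:
  fixes \<phi> :: "'d \<Rightarrow> real^'r"
  assumes P: "prob_space P" and \<phi>: "\<phi> \<in> borel_measurable P" and K: "\<And>x. norm (\<phi> x) \<le> K"
  shows "real CARD('r) * lambda_min (second_moment P \<phi>) \<le> K^2"
proof -
  interpret prob_space P by (rule P)
  let ?lam = "lambda_min (second_moment P \<phi>)"
  have "real CARD('r) * ?lam = (\<Sum>i\<in>(UNIV::'r set). ?lam * (norm (axis i (1::real)))^2)" by simp
  also have "\<dots> \<le> (\<Sum>i\<in>UNIV. (\<integral>y. (\<phi> y \<bullet> axis i 1)^2 \<partial>P))"
    using lambda_min_mult_norm_le_quad_form[OF symmetric_matrix_second_moment]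
    by (intro sum_mono) (simp only: quad_form_second_moment[OF P \<phi> K, symmetric])
  also have "\<dots> = (\<integral>y. (\<Sum>i\<in>UNIV. (\<phi> y \<bullet> axis i 1)^2) \<partial>P)"
    by (rule Bochner_Integration.integral_sum[symmetric]) (rule integrable_sq_inner[OF P \<phi> K])
  also have "\<dots> = (\<integral>y. (norm (\<phi> y))^2 \<partial>P)"
    by (simp add: inner_axis norm_vec_def L2_set_def sum_nonneg)
  also have "\<dots> \<le> (\<integral>y. K^2 \<partial>P)"
    using K \<phi> by (intro integral_mono integrable_const_bound[where B = "K^2"] AE_I2)
      (auto intro: power_mono)
  finally show ?thesis by (simp add: prob_space)
qed

lemma second_moment_pos_def:
  fixes \<phi> :: "'d \<Rightarrow> real^'r"
  assumes "lambda_min (second_moment P \<phi>) > 0" "y \<noteq> 0"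
  shows "quad_form (second_moment P \<phi>) y > 0"
proof -
  have "0 < lambda_min (second_moment P \<phi>) * (norm y)^2" using assms by simp
  then show ?thesis using lambda_min_mult_norm_le_quad_form[OF symmetric_matrix_second_moment] by (rule less_le_trans)
qed

(* The subsampled estimate of the theorem is emp_second_moment phi (x o s) k. *)
definition emp_second_moment :: "('d \<Rightarrow> real^'r) \<Rightarrow> (nat \<Rightarrow> 'd) \<Rightarrow> nat \<Rightarrow> real^'r^'r" where
  "emp_second_moment \<phi> x n = (1 / real n) *\<^sub>R (\<Sum>i<n. outer (\<phi> (x i)) (\<phi> (x i)))"

lemma symmetric_matrix_emp_second_moment: "symmetric_matrix (emp_second_moment \<phi> x n)"
  unfolding emp_second_moment_def by (intro symmetric_matrix_scaleR symmetric_matrix_sum symmetric_matrix_outer)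

lemma quad_form_emp_second_moment:
  "quad_form (emp_second_moment \<phi> x n) v = (\<Sum>i<n. (\<phi> (x i) \<bullet> v)^2) / real n"
  by (simp add: quad_form_def emp_second_moment_def scaleR_matrix_vector_assoc[symmetric]
      matrix_sum_mult_vector inner_sum_right outer_mult_vector power2_eq_square inner_commute)

lemma quad_form_emp_second_moment_bounds:
  fixes \<phi> :: "'d \<Rightarrow> real^'r"
  assumes K: "\<And>x. norm (\<phi> x) \<le> K"
  shows "0 \<le> quad_form (emp_second_moment \<phi> x n) y" and "quad_form (emp_second_moment \<phi> x n) y \<le> K^2 * (norm y)^2"
proof -
  show "0 \<le> quad_form (emp_second_moment \<phi> x n) y"
    unfolding quad_form_emp_second_moment by (simp add: sum_nonneg)
  have "(\<Sum>i<n. (\<phi> (x i) \<bullet> y)^2) \<le> real n * (K^2 * (norm y)^2)"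
    using sum_mono[of "{..<n}" "\<lambda>i. (\<phi> (x i) \<bullet> y)^2" "\<lambda>_. K^2 * (norm y)^2"] sq_inner_le[OF K] by simp
  then show "quad_form (emp_second_moment \<phi> x n) y \<le> K^2 * (norm y)^2"
    unfolding quad_form_emp_second_moment by (cases "n = 0") (auto simp: divide_le_eq mult.commute)
qed

(* 441/359 = (1 + nu)^2 / (1 - 2 nu - nu^2) for the mesh nu = 1/20 of the net. *)
lemma emp_second_moment_close_of_net:
  fixes \<phi> :: "'d \<Rightarrow> real^'r" and S :: "real^'r^'r"
  assumes S: "symmetric_matrix S" and lower: "\<And>y. lam * (norm y)^2 \<le> quad_form S y" and lam: "lam > 0"
    and K: "\<And>x. norm (\<phi> x) \<le> K"
    and net: "\<And>u. quad_form S u = 1 \<Longrightarrow> \<exists>v\<in>G. quad_form S (u - v) \<le> (1/20)^2"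
    and on_net: "\<And>v. v \<in> G \<Longrightarrow> \<bar>quad_form (emp_second_moment \<phi> x n) v - quad_form S v\<bar> \<le> \<epsilon> * quad_form S v"
    and \<epsilon>: "\<epsilon> \<ge> 0"
  shows "\<bar>quad_form (emp_second_moment \<phi> x n) y - quad_form S y\<bar> \<le> 441/359 * \<epsilon> * quad_form S y"
proof -
  let ?E = "emp_second_moment \<phi> x n"
  have pd: "quad_form S y > 0" if "y \<noteq> 0" for y
  proof -
    have "0 < lam * (norm y)^2" using lam that by simp
    then show ?thesis using lower by (rule less_le_trans)
  qed
  have crude: "\<bar>quad_form (?E - S) y\<bar> \<le> (K^2 / lam + 1) * quad_form S y" for y
  proof -
    have "K^2 * (norm y)^2 \<le> K^2 / lam * quad_form S y"
      using mult_left_mono[OF lower[of y], of "K^2 / lam"] lam by simp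
    then show ?thesis
      using quad_form_emp_second_moment_bounds[where \<phi> = \<phi> and x = x and n = n and y = y, OF K] quad_form_nonneg_of_pos_def[OF pd, of y]
      unfolding quad_form_diff_matrix by (simp add: abs_le_iff algebra_simps)
  qed
  have "\<bar>quad_form (?E - S) y\<bar> \<le> \<epsilon> * (1 + 1/20)^2 / (1 - 2 * (1/20) - (1/20)^2) * quad_form S y"
    by (rule relative_quad_form_bound_from_net[OF symmetric_matrix_diff[OF symmetric_matrix_emp_second_moment S]
          S pd crude net]) (use on_net \<epsilon> in \<open>auto simp: quad_form_diff_matrix power2_eq_square\<close>)
  then show ?thesis unfolding quad_form_diff_matrix by (simp add: power2_eq_square)
qed

section \<open>Sampling and subsampling\<close>

lemma empirical_quad_form_deviation_prob:
  fixes \<phi> :: "'d \<Rightarrow> real^'r" and N :: nat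
  assumes P: "prob_space P" and \<phi>: "\<phi> \<in> borel_measurable P" and K: "\<And>y. norm (\<phi> y) \<le> K" "K > 0"
    and lower: "\<And>v. lam * (norm v)^2 \<le> quad_form (second_moment P \<phi>) v" and lam: "lam \<ge> 0"
    and v: "v \<noteq> 0" and J: "J \<subseteq> {0..<N}" "J \<noteq> {}" "k \<le> card J" and \<epsilon>: "0 < \<epsilon>" "\<epsilon> \<le> 1/3"
  defines "S \<equiv> second_moment P \<phi>" and "PM \<equiv> PiM {0..<N} (\<lambda>_. P)"
  shows "measure PM {x\<in>space PM. \<not> \<bar>(\<Sum>j\<in>J. (\<phi> (x j) \<bullet> v)^2) / real (card J) - quad_form S v\<bar>
            \<le> \<epsilon> * quad_form S v} \<le> 2 * exp (- (real k * \<epsilon>^2 * lam / (3 * K^2)))"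
proof -
  define b where "b = K^2 * (norm v)^2"
  have b: "b > 0" unfolding b_def using K v by simp
  have \<mu>: "(\<integral>y. (\<phi> y \<bullet> v)^2 \<partial>P) = quad_form S v"
    unfolding S_def by (rule quad_form_second_moment[OF P \<phi> K(1), symmetric])
  have "real k * lam * b \<le> real (card J) * quad_form S v * K^2"
  proof -
    have "real k * lam * b = real k * (lam * (norm v)^2) * K^2" unfolding b_def by (simp add: mult_ac)
    also have "\<dots> \<le> real (card J) * quad_form S v * K^2"
      using lower[of v] J(3) lam unfolding S_def by (intro mult_right_mono mult_mono) auto
    finally show ?thesis .
  qed
  then have "real k * lam * b * \<epsilon>^2 \<le> real (card J) * quad_form S v * K^2 * \<epsilon>^2"
    by (rule mult_right_mono) simp
  then have "real k * \<epsilon>^2 * lam / (3 * K^2) \<le> real (card J) * quad_form S v * \<epsilon>^2 / (3 * b)"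
    using b K(2) by (simp add: field_simps)
  moreover have "measure PM {x\<in>space PM. \<not> \<bar>(\<Sum>j\<in>J. (\<phi> (x j) \<bullet> v)^2) / real (card J) - quad_form S v\<bar>
            \<le> \<epsilon> * quad_form S v} \<le> 2 * exp (- (real (card J) * quad_form S v * \<epsilon>^2 / (3 * b)))"
  proof -
    have gm: "(\<lambda>y. (\<phi> y \<bullet> v)^2) \<in> borel_measurable P"
      by (intro borel_measurable_power borel_measurable_inner \<phi> measurable_const) simp
    have g0: "0 \<le> (\<phi> y \<bullet> v)^2" and gb: "(\<phi> y \<bullet> v)^2 \<le> b" for y
      unfolding b_def by (simp_all add: sq_inner_le[OF K(1)])
    show ?thesis
      using chernoff_PiM_mean_deviation[OF P finite_atLeastLessThan J(1,2) gm g0 gb b \<epsilon>]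
      unfolding PM_def \<mu> .
  qed
  ultimately show ?thesis by (smt (verit) exp_le_cancel_iff)
qed

lemma (in prob_space) prob_compl_finite_Union_ge:
  fixes q :: real
  assumes I: "finite I" and B: "\<And>i. i \<in> I \<Longrightarrow> B i \<in> events" and q: "\<And>i. i \<in> I \<Longrightarrow> prob (B i) \<le> q"
  shows "space M - (\<Union>i\<in>I. B i) \<in> events" and "1 - card I * q \<le> prob (space M - (\<Union>i\<in>I. B i))"
proof -
  show "space M - (\<Union>i\<in>I. B i) \<in> events" using I B by auto
  have "prob (\<Union>i\<in>I. B i) \<le> (\<Sum>i\<in>I. prob (B i))" using I B by (intro finite_measure_subadditive_finite) auto
  also have "\<dots> \<le> card I * q" using sum_mono[OF q] by simp
  finally show "1 - card I * q \<le> prob (space M - (\<Union>i\<in>I. B i))"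
    using I B by (subst prob_compl) auto
qed

lemma empirical_quad_forms_close_on_finite_set:
  fixes \<phi> :: "'d \<Rightarrow> real^'r" and N :: nat
  assumes P: "prob_space P" and \<phi>: "\<phi> \<in> borel_measurable P" and K: "\<And>y. norm (\<phi> y) \<le> K" "K > 0"
    and lower: "\<And>v. lam * (norm v)^2 \<le> quad_form (second_moment P \<phi>) v" and lam: "lam \<ge> 0"
    and G: "finite G" and s: "inj_on s {..<k}" "s ` {..<k} \<subseteq> {0..<N}" and k: "1 \<le> k" "k \<le> N"
    and \<epsilon>: "0 < \<epsilon>" "\<epsilon> \<le> 1/3"
  defines "S \<equiv> second_moment P \<phi>" and "PM \<equiv> PiM {0..<N} (\<lambda>_. P)"
  shows "\<exists>A\<in>sets PM. 1 - 4 * card G * exp (- (real k * \<epsilon>^2 * lam / (3 * K^2))) \<le> measure PM A \<and>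
          (\<forall>x\<in>A. \<forall>v\<in>G. \<bar>quad_form (emp_second_moment \<phi> x N) v - quad_form S v\<bar> \<le> \<epsilon> * quad_form S v \<and>
                        \<bar>quad_form (emp_second_moment \<phi> (x \<circ> s) k) v - quad_form S v\<bar> \<le> \<epsilon> * quad_form S v)"
proof -
  interpret PM: prob_space PM unfolding PM_def by (intro prob_space_PiM) (use P in auto)
  define p where "p = exp (- (real k * \<epsilon>^2 * lam / (3 * K^2)))"
  define bad where "bad = (\<lambda>(v, J). {x\<in>space PM. \<not> \<bar>(\<Sum>j\<in>J. (\<phi> (x j) \<bullet> v)^2) / real (card J) - quad_form S v\<bar>
                                         \<le> \<epsilon> * quad_form S v})"
  define B where "B = (G - {0}) \<times> {{0..<N}, s ` {..<k}}"
  have B: "v \<noteq> 0" "J \<subseteq> {0..<N}" "J \<noteq> {}" "k \<le> card J" if "(v, J) \<in> B" for v J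
    using that s k card_image[OF s(1)] unfolding B_def by auto
  have "bad vJ \<in> sets PM" if "vJ \<in> B" for vJ
  proof -
    obtain v J where vJ: "vJ = (v, J)" by (cases vJ)
    have [measurable]: "(\<lambda>x. \<Sum>j\<in>J. (\<phi> (x j) \<bullet> v)^2) \<in> borel_measurable PM"
      unfolding PM_def using B(2) that vJ
      by (intro borel_measurable_sum_components_PiM borel_measurable_power borel_measurable_inner \<phi>) auto
    show ?thesis unfolding vJ bad_def by simp measurable
  qed
  moreover have "measure PM (bad vJ) \<le> 2 * p" if "vJ \<in> B" for vJ
  proof -
    obtain v J where vJ: "vJ = (v, J)" by (cases vJ)
    show ?thesis
      using B[of v J] that unfolding vJ bad_def p_def S_def PM_def
      by (auto intro!: empirical_quad_form_deviation_prob[OF P \<phi> K lower lam _ _ _ _ \<epsilon>])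
  qed
  moreover have "finite B" unfolding B_def using G by simp
  ultimately have A: "space PM - \<Union>(bad ` B) \<in> sets PM" "1 - card B * (2 * p) \<le> measure PM (space PM - \<Union>(bad ` B))"
    using PM.prob_compl_finite_Union_ge[of B bad "2 * p"] by auto
  have "card B \<le> card G * 2"
    unfolding B_def card_cartesian_product using G
    by (intro mult_mono card_mono card_insert_le_m1) (auto simp: card_insert_if)
  then have "real (card B) * (2 * p) \<le> real (card G * 2) * (2 * p)"
    unfolding p_def by (intro mult_right_mono) simp_all
  moreover have "real (card G * 2) * (2 * p) = 4 * card G * p" by simp
  ultimately have bound: "1 - 4 * card G * p \<le> measure PM (space PM - \<Union>(bad ` B))"
    using A(2) by linarith
  have close: "\<bar>quad_form (emp_second_moment \<phi> x N) v - quad_form S v\<bar> \<le> \<epsilon> * quad_form S v \<and>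
      \<bar>quad_form (emp_second_moment \<phi> (x \<circ> s) k) v - quad_form S v\<bar> \<le> \<epsilon> * quad_form S v"
    if "x \<in> space PM - \<Union>(bad ` B)" "v \<in> G" for x v
  proof (cases "v = 0")
    case False
    then have "x \<notin> bad (v, {0..<N})" "x \<notin> bad (v, s ` {..<k})" "x \<in> space PM"
      using that unfolding B_def by auto
    moreover have "(\<Sum>j\<in>s ` {..<k}. (\<phi> (x j) \<bullet> v)^2) = (\<Sum>i<k. (\<phi> (x (s i)) \<bullet> v)^2)"
      by (simp add: sum.reindex[OF s(1)])
    ultimately show ?thesis
      unfolding bad_def quad_form_emp_second_moment
      by (simp add: card_image[OF s(1)] atLeast0LessThan)
  qed simp
  show ?thesis
    unfolding p_def[symmetric] by (intro bexI[OF _ A(1)] conjI bound ballI close)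
qed

lemma ln_net_size_le:
  fixes x \<delta> :: real and r :: nat
  assumes r: "r \<ge> 1" and xr: "x \<ge> r" and \<delta>: "0 < \<delta>" "\<delta> < 1"
  shows "ln 4 + r * ln (23 * x) \<le> ln \<delta> + 98/25 * x * ln (4 * r / \<delta>)"
proof -
  define L where "L = ln (4 * r / \<delta>)"
  define l2 where "l2 = ln (2::real)"
  define lr where "lr = ln (real r)"
  have x1: "x \<ge> 1" and x0: "x > 0" using r xr by linarith+
  have lr0: "lr \<ge> 0" unfolding lr_def using r by simp
  have l2b: "2/3 \<le> l2" unfolding l2_def by (rule ln2_ge_two_thirds)
  have ln4: "ln (4::real) = 2 * l2" unfolding l2_def using ln_realpow[of 2 2] by simp
  have Ld: "L = 2 * l2 + lr - ln \<delta>" unfolding L_def lr_def using \<delta> r ln4 by (simp add: ln_div ln_mult)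
  have ln23: "ln (23::real) \<le> 5 * l2"
  proof -
    have "ln (23::real) \<le> ln (2^5)" by simp
    then show ?thesis unfolding l2_def by (subst (asm) ln_realpow) auto
  qed
  have lnx: "r * ln x \<le> r * lr + x - r"
  proof -
    have "ln (x / r) \<le> x / r - 1" using x0 r by (intro ln_le_minus_one) auto
    then have "r * (ln x - lr) \<le> r * (x / r - 1)" unfolding lr_def using x0 r by (simp add: ln_div)
    then show ?thesis using r by (simp add: algebra_simps)
  qed
  have split: "r * ln (23 * x) = r * ln 23 + r * ln x" using x0 by (simp add: ln_mult algebra_simps)
  have f1: "r * ln 23 \<le> 5 * (r * l2)" using mult_left_mono[OF ln23, of "real r"] by (simp add: mult_ac)
  have f2: "r * l2 \<le> x * l2" "r * lr \<le> x * lr" using xr l2b lr0 by (intro mult_right_mono; simp)+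
  have f3: "0 \<le> x * lr" using x0 lr0 by simp
  have "(98/25 * x - 1) * (2 * l2 + lr) \<le> (98/25 * x - 1) * L"
    using Ld \<delta> x1 by (intro mult_left_mono) auto
  moreover have "(98/25 * x - 1) * (2 * l2 + lr) = 196/25 * (x * l2) + 98/25 * (x * lr) - 2 * l2 - lr"
    "(98/25 * x - 1) * L = 98/25 * (x * L) - L"
    by (simp_all add: algebra_simps)
  ultimately have f4: "196/25 * (x * l2) + 98/25 * (x * lr) - 2 * l2 - lr \<le> 98/25 * (x * L) - L"
    by simp
  have "(2/3) * (71/25 * x - 2) \<le> l2 * (71/25 * x - 2)" using l2b x1 by (intro mult_right_mono) auto
  moreover have "(2/3) * (71/25 * x - 2) = 142/75 * x - 4/3" "l2 * (71/25 * x - 2) = 71/25 * (x * l2) - 2 * l2"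
    by (simp_all add: algebra_simps)
  ultimately have f5: "142/75 * x - 4/3 \<le> 71/25 * (x * l2) - 2 * l2" by simp
  have "r * ln 23 + r * ln x + L \<le> lr + 98/25 * (x * L)"
    using f1 f2 f3 f4 f5 lnx r x1 by linarith
  then show ?thesis unfolding split ln4 L_def[symmetric] using Ld by (simp add: mult.assoc)
qed

(* (23 x)^r bounds the size of the net and 98/25 x ln (4 r / delta) is the Chernoff exponent
   k epsilon^2 lambda / (3 K^2) for epsilon = 21/20 tau, where x = K^2 / lambda. *)
lemma net_union_bound_le:
  fixes x \<delta> c :: real and r :: nat
  assumes r: "r \<ge> 1" and xr: "x \<ge> r" and \<delta>: "0 < \<delta>" "\<delta> < 1" and c: "0 \<le> c" "c \<le> (23 * x)^r"
  shows "4 * c * exp (- (98/25 * x * ln (4 * r / \<delta>))) \<le> \<delta>"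
proof -
  have x0: "x > 0" using r xr by linarith
  have "4 * c * exp (- (98/25 * x * ln (4 * r / \<delta>))) \<le> 4 * (23 * x)^r * exp (- (98/25 * x * ln (4 * r / \<delta>)))"
    using c by (intro mult_right_mono mult_left_mono) auto
  also have "\<dots> = exp (ln 4 + r * ln (23 * x) - 98/25 * x * ln (4 * r / \<delta>))"
  proof -
    have pow: "exp (real r * ln (23 * x)) = (23 * x)^r" using x0 by (simp add: exp_of_nat_mult)
    have "4 * A * exp (- e) = exp (ln 4) * A / exp e" for A e :: real
      by (simp add: exp_minus divide_inverse)
    then show ?thesis by (simp only: exp_diff exp_add pow)
  qed
  also have "\<dots> \<le> exp (ln \<delta>)" using ln_net_size_le[OF r xr \<delta>] by simp
  finally show ?thesis using \<delta> by simp
qed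

lemma finite_subsamples: "finite (subsamples N k)"
  unfolding subsamples_def by (rule finite_subset[of _ "PiE {0..<k} (\<lambda>_. {0..<N})"]) (auto intro: finite_PiE)

lemma subsamples_nonempty: "k \<le> N \<Longrightarrow> subsamples N k \<noteq> {}"
  unfolding subsamples_def by (auto intro!: exI[of _ "restrict id {0..<k}"] simp: inj_on_def)

lemma subsamples_inj_image:
  "s \<in> subsamples N k \<Longrightarrow> inj_on s {..<k} \<and> s ` {..<k} \<subseteq> {0..<N}"
  unfolding subsamples_def by (auto simp: atLeast0LessThan PiE_def Pi_def)

lemma measure_pair_pmf_of_set_sections_ge:
  fixes M :: "'a measure" and A :: "'b \<Rightarrow> 'a set"
  assumes M: "prob_space M" and S: "finite S" "S \<noteq> {}"
    and A: "\<And>s. s \<in> S \<Longrightarrow> A s \<in> sets M" and p: "\<And>s. s \<in> S \<Longrightarrow> p \<le> measure M (A s)"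
  defines "E \<equiv> (\<Union>s\<in>S. A s \<times> {s})" and "Q \<equiv> M \<Otimes>\<^sub>M measure_pmf (pmf_of_set S)"
  shows "E \<in> sets Q" and "p \<le> measure Q E"
proof -
  interpret M: prob_space M by (rule M)
  interpret Q: prob_space Q unfolding Q_def by (intro prob_space_pair M prob_space_measure_pmf)
  show E: "E \<in> sets Q" unfolding E_def Q_def using A S by (intro sets.finite_UN) auto
  have "emeasure Q E = (\<Sum>s\<in>S. emeasure Q (A s \<times> {s}))"
    unfolding E_def using A S unfolding Q_def
    by (intro sum_emeasure[symmetric]) (auto simp: disjoint_family_on_def)
  also have "\<dots> = (\<Sum>s\<in>S. ennreal (measure M (A s) / card S))"
  proof (intro sum.cong refl)
    fix s assume s: "s \<in> S"
    have "emeasure Q (A s \<times> {s}) = emeasure M (A s) * emeasure (measure_pmf (pmf_of_set S)) {s}"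
      unfolding Q_def using A[OF s]
      by (intro sigma_finite_measure.emeasure_pair_measure_Times prob_space_imp_sigma_finite prob_space_measure_pmf) auto
    also have "\<dots> = ennreal (measure M (A s)) * ennreal (1 / card S)"
      using s S by (simp add: emeasure_pmf_single M.emeasure_eq_measure)
    also have "\<dots> = ennreal (measure M (A s) / card S)"
      by (simp add: ennreal_mult[symmetric])
    finally show "emeasure Q (A s \<times> {s}) = ennreal (measure M (A s) / card S)" .
  qed
  also have "\<dots> = ennreal ((\<Sum>s\<in>S. measure M (A s)) / card S)"
    by (simp add: sum_ennreal sum_divide_distrib)
  finally have "measure Q E = (\<Sum>s\<in>S. measure M (A s)) / card S"
    using Q.emeasure_eq_measure by (simp add: sum_nonneg)
  moreover have "p * card S \<le> (\<Sum>s\<in>S. measure M (A s))"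
    using sum_mono[OF p] by (simp add: mult.commute)
  moreover have "real (card S) > 0" using S by (simp add: card_gt_0_iff)
  ultimately show "p \<le> measure Q E" by (simp add: le_divide_eq)
qed

lemma pmf_of_set_mixture_event:
  fixes M :: "'a measure" and R :: "'a \<Rightarrow> 'b \<Rightarrow> bool"
  assumes M: "prob_space M" and S: "finite S" "S \<noteq> {}"
    and events: "\<And>s. s \<in> S \<Longrightarrow> \<exists>A\<in>sets M. p \<le> measure M A \<and> (\<forall>x\<in>A. R x s)"
  shows "\<exists>E\<in>sets (M \<Otimes>\<^sub>M measure_pmf (pmf_of_set S)).
           p \<le> measure (M \<Otimes>\<^sub>M measure_pmf (pmf_of_set S)) E \<and> (\<forall>(x, s)\<in>E. R x s)"
proof -
  from events have "\<forall>s\<in>S. \<exists>A. A \<in> sets M \<and> p \<le> measure M A \<and> (\<forall>x\<in>A. R x s)" by blast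
  then have "\<exists>A. \<forall>s\<in>S. A s \<in> sets M \<and> p \<le> measure M (A s) \<and> (\<forall>x\<in>A s. R x s)" by (rule bchoice)
  then obtain A where A: "\<forall>s\<in>S. A s \<in> sets M \<and> p \<le> measure M (A s) \<and> (\<forall>x\<in>A s. R x s)" by blast
  have "A s \<in> sets M" "p \<le> measure M (A s)" if "s \<in> S" for s using A that by auto
  note E = measure_pair_pmf_of_set_sections_ge[OF M S this]
  show ?thesis
  proof (rule bexI[OF _ E(1)], intro conjI E(2) ballI)
    fix z assume "z \<in> (\<Union>s\<in>S. A s \<times> {s})"
    then show "case z of (x, s) \<Rightarrow> R x s" using A by auto
  qed
qed

lemma emp_second_moments_close_whp:
  fixes P :: "'d measure" and \<phi> :: "'d \<Rightarrow> real^'r" and N k :: nat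
  defines "S \<equiv> second_moment P \<phi>" and "lam \<equiv> lambda_min (second_moment P \<phi>)"
  assumes P: "prob_space P" and \<phi>: "\<phi> \<in> borel_measurable P" and K: "\<And>x. norm (\<phi> x) \<le> K"
    and lam: "lam > 0" and s: "s \<in> subsamples N k" and k: "1 \<le> k" "k \<le> N" and \<epsilon>: "0 < \<epsilon>" "\<epsilon> \<le> 1/3"
  shows "\<exists>A\<in>sets (PiM {0..<N} (\<lambda>_. P)).
           1 - 4 * (23 * (K^2 / lam)) ^ CARD('r) * exp (- (real k * \<epsilon>^2 * lam / (3 * K^2)))
             \<le> measure (PiM {0..<N} (\<lambda>_. P)) A \<and>
           (\<forall>x\<in>A. \<forall>y. \<bar>quad_form (emp_second_moment \<phi> x N) y - quad_form S y\<bar> \<le> 441/359 * \<epsilon> * quad_form S y \<and>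
                      \<bar>quad_form (emp_second_moment \<phi> (x \<circ> s) k) y - quad_form S y\<bar> \<le> 441/359 * \<epsilon> * quad_form S y)"
proof -
  have lower: "lam * (norm y)^2 \<le> quad_form S y" for y
    unfolding S_def lam_def by (rule lambda_min_mult_norm_le_quad_form[OF symmetric_matrix_second_moment])
  have upper: "quad_form S y \<le> K^2 * (norm y)^2" for y
    unfolding S_def by (rule quad_form_second_moment_le[OF P \<phi> K])
  have rK: "real CARD('r) \<le> K^2 / lam"
    using card_mult_lambda_min_second_moment_le[OF P \<phi> K] lam unfolding lam_def by (simp add: field_simps)
  then have "1 \<le> K^2 / lam" by (rule order_trans[rotated]) simp
  then have "lam \<le> K^2" using lam by (simp add: le_divide_eq)
  then have K2: "K^2 > 0" using lam by linarith
  moreover have "K \<ge> 0" using K[of undefined] norm_ge_zero order_trans by blast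
  ultimately have Kpos: "K > 0" by (cases "K = 0") auto
  obtain G where G: "finite G" "card G \<le> (2 * nat \<lceil>sqrt (real CARD('r) * K^2 / lam) / (2 * (1/20))\<rceil> + 1) ^ CARD('r)"
    and net: "\<And>u. quad_form S u = 1 \<Longrightarrow> \<exists>v\<in>G. quad_form S (u - v) \<le> (1/20)^2"
    using quad_form_sphere_net[OF lam lower upper K2, of "1/20"] by auto
  have "real (card G) \<le> real ((2 * nat \<lceil>sqrt (real CARD('r) * K^2 / lam) / (2 * (1/20))\<rceil> + 1) ^ CARD('r))"
    using G(2) by (rule of_nat_mono)
  also have "\<dots> = real (2 * nat \<lceil>sqrt (real CARD('r) * (K^2 / lam)) / (2 * (1/20))\<rceil> + 1) ^ CARD('r)"
    by simp
  also have "\<dots> \<le> (23 * (K^2 / lam)) ^ CARD('r)" by (intro power_mono net_size_le rK) auto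
  finally have "real (card G) \<le> (23 * (K^2 / lam)) ^ CARD('r)" .
  moreover obtain A where A: "A \<in> sets (PiM {0..<N} (\<lambda>_. P))"
    "1 - 4 * card G * exp (- (real k * \<epsilon>^2 * lam / (3 * K^2))) \<le> measure (PiM {0..<N} (\<lambda>_. P)) A"
    and close: "\<And>x v. x \<in> A \<Longrightarrow> v \<in> G \<Longrightarrow>
      \<bar>quad_form (emp_second_moment \<phi> x N) v - quad_form S v\<bar> \<le> \<epsilon> * quad_form S v \<and>
      \<bar>quad_form (emp_second_moment \<phi> (x \<circ> s) k) v - quad_form S v\<bar> \<le> \<epsilon> * quad_form S v"
    using empirical_quad_forms_close_on_finite_set[OF P \<phi> K Kpos, of lam, folded S_def,
        OF lower _ G(1) conjunct1[OF subsamples_inj_image[OF s]] conjunct2[OF subsamples_inj_image[OF s]] k \<epsilon>]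
      lam by auto
  ultimately show ?thesis
    using \<epsilon> by (intro bexI[OF _ A(1)] conjI ballI allI order_trans[OF _ A(2)]
        emp_second_moment_close_of_net[OF _ lower lam K net] symmetric_matrix_second_moment[of P \<phi>, folded S_def])
      (auto intro!: mult_left_mono mult_right_mono simp: close)
qed

lemma sample_size_rate_bounds:
  fixes q \<delta> :: real and r k :: nat
  defines "\<tau> \<equiv> 2 * q * sqrt (8 * ln (4 * r / \<delta>) / (3 * k))"
  assumes q: "q \<ge> 1" and r: "r \<ge> 1" and \<delta>: "0 < \<delta>" "\<delta> < 1"
    and k: "real k \<ge> 8/3 * ln (4 * r / \<delta>) * (8 * q)^2"
  shows "1 \<le> k" and "0 < \<tau>" and "\<tau> \<le> 1/4"
    and "real k * (21/20 * \<tau>)^2 / (3 * q) = 98/25 * q * ln (4 * r / \<delta>)"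
proof -
  define lg where "lg = ln (4 * r / \<delta>)"
  have "1 < 4 * real r / \<delta>" using \<delta> r by (simp add: field_simps)
  then have lg: "lg > 0" unfolding lg_def by simp
  then have "8/3 * lg * (8 * q)^2 > 0" using q by simp
  then have kpos: "real k > 0" using k unfolding lg_def by linarith
  then show "1 \<le> k" by simp
  have \<tau>2: "\<tau>^2 = 32 * q^2 * lg / (3 * real k)"
    unfolding \<tau>_def lg_def[symmetric] using lg kpos by (simp add: power_mult_distrib)
  show \<tau>: "0 < \<tau>" unfolding \<tau>_def lg_def[symmetric] using lg kpos q by simp
  have "\<tau>^2 \<le> 32 * q^2 * lg / (3 * (8/3 * lg * (8 * q)^2))"
    unfolding \<tau>2 using k kpos lg q unfolding lg_def[symmetric] by (intro divide_left_mono mult_left_mono) auto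
  also have "\<dots> = (1/4)^2" using lg q by (simp add: field_simps power2_eq_square)
  finally show "\<tau> \<le> 1/4" using \<tau> by (simp add: power2_le_iff_abs_le abs_le_iff)
  show "real k * (21/20 * \<tau>)^2 / (3 * q) = 98/25 * q * ln (4 * r / \<delta>)"
    unfolding power_mult_distrib \<tau>2 lg_def[symmetric] using kpos q by (simp add: field_simps power2_eq_square)
qed

lemma subsample_pred_cov_close_whp:
  fixes P :: "'d measure" and \<phi> :: "'d \<Rightarrow> real^'r" and N k :: nat
  defines "lam \<equiv> lambda_min (second_moment P \<phi>)"
  assumes P: "prob_space P" and \<phi>: "\<phi> \<in> borel_measurable P" and K: "\<And>x. norm (\<phi> x) \<le> K"
    and lam: "lam > 0" and sigma2: "sigma2 > 0" and \<delta>: "0 < \<delta>" "\<delta> < 1"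
    and s: "s \<in> subsamples N k" and kN: "k \<le> N"
    and k: "real k \<ge> 8/3 * ln (4 * CARD('r) / \<delta>) * (8 * K^2 / lam)^2"
  shows "\<exists>A\<in>sets (PiM {0..<N} (\<lambda>_. P)). 1 - \<delta> \<le> measure (PiM {0..<N} (\<lambda>_. P)) A \<and>
           (\<forall>x\<in>A. \<forall>xs. spec_norm (length xs) (\<lambda>i j. pred_cov sigma2 N (emp_second_moment \<phi> (x \<circ> s) k) \<phi> xs i j
                                              - pred_cov sigma2 N (emp_second_moment \<phi> x N) \<phi> xs i j)
              \<le> real (length xs) * (2 * K^4 / lam) * sqrt (8 * ln (4 * CARD('r) / \<delta>) / (3 * real k)))"
proof -
  define q where "q = K^2 / lam"
  define \<tau> where "\<tau> = 2 * q * sqrt (8 * ln (4 * CARD('r) / \<delta>) / (3 * k))"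
  define \<epsilon> where "\<epsilon> = 21/20 * \<tau>"
  have q: "real CARD('r) \<le> q"
    using card_mult_lambda_min_second_moment_le[OF P \<phi> K] lam unfolding q_def lam_def by (simp add: field_simps)
  then have q1: "1 \<le> q" by (rule order_trans[rotated]) simp
  note rate = sample_size_rate_bounds[OF q1 _ \<delta>, of "CARD('r)" k, folded \<tau>_def]
  have "8 * K^2 / lam = 8 * q" unfolding q_def by simp
  then have k1: "1 \<le> k" and \<tau>: "0 < \<tau>" "\<tau> \<le> 1/4"
    and expo: "real k * \<epsilon>^2 / (3 * q) = 98/25 * q * ln (4 * CARD('r) / \<delta>)"
    using rate k unfolding \<epsilon>_def by auto
  obtain A where A: "A \<in> sets (PiM {0..<N} (\<lambda>_. P))"
    "1 - 4 * (23 * q) ^ CARD('r) * exp (- (real k * \<epsilon>^2 * lam / (3 * K^2))) \<le> measure (PiM {0..<N} (\<lambda>_. P)) A"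
    and close: "\<And>x y. x \<in> A \<Longrightarrow>
        \<bar>quad_form (emp_second_moment \<phi> x N) y - quad_form (second_moment P \<phi>) y\<bar>
          \<le> 9261/7180 * \<tau> * quad_form (second_moment P \<phi>) y \<and>
        \<bar>quad_form (emp_second_moment \<phi> (x \<circ> s) k) y - quad_form (second_moment P \<phi>) y\<bar>
          \<le> 9261/7180 * \<tau> * quad_form (second_moment P \<phi>) y"
    using emp_second_moments_close_whp[OF P \<phi> K lam[unfolded lam_def] s k1 kN, of \<epsilon>] \<tau>
    unfolding \<epsilon>_def q_def lam_def by auto
  have "lam \<le> K^2" using q1 lam unfolding q_def by (simp add: le_divide_eq)
  then have "real k * \<epsilon>^2 * lam / (3 * K^2) = real k * \<epsilon>^2 / (3 * q)"
    unfolding q_def using lam by (simp add: field_simps)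
  then have "4 * (23 * q) ^ CARD('r) * exp (- (real k * \<epsilon>^2 * lam / (3 * K^2))) \<le> \<delta>"
    unfolding expo by (rule ssubst) (rule net_union_bound_le[OF _ q \<delta>], use q1 in auto)
  moreover have "spec_norm (length xs) (\<lambda>i j. pred_cov sigma2 N (emp_second_moment \<phi> (x \<circ> s) k) \<phi> xs i j
                                              - pred_cov sigma2 N (emp_second_moment \<phi> x N) \<phi> xs i j)
          \<le> real (length xs) * (2 * K^4 / lam) * sqrt (8 * ln (4 * CARD('r) / \<delta>) / (3 * real k))"
    if "x \<in> A" for x xs
  proof -
    have "spec_norm (length xs) (\<lambda>i j. pred_cov sigma2 N (emp_second_moment \<phi> (x \<circ> s) k) \<phi> xs i j
                                     - pred_cov sigma2 N (emp_second_moment \<phi> x N) \<phi> xs i j)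
        \<le> real (length xs) * (\<tau> * K^2)"
      using close[OF that] lam unfolding lam_def
      by (intro spec_norm_pred_cov_diff_le_rate[OF second_moment_pos_def symmetric_matrix_emp_second_moment
            symmetric_matrix_emp_second_moment \<tau> _ _ sigma2 K]) auto
    also have "\<dots> = real (length xs) * (2 * K^4 / lam) * sqrt (8 * ln (4 * CARD('r) / \<delta>) / (3 * real k))"
      unfolding \<tau>_def q_def using lam by (simp add: field_simps power2_eq_square power4_eq_xxxx)
    finally show ?thesis .
  qed
  ultimately show ?thesis using A by (intro bexI[OF _ A(1)]) auto
qed

lemma pred_cov_close_whp:
  fixes P :: "'d measure" and \<phi> :: "'d \<Rightarrow> real^'r" and N k :: nat
  defines "lam \<equiv> lambda_min (second_moment P \<phi>)"
  assumes P: "prob_space P" and \<phi>: "\<phi> \<in> borel_measurable P" and K: "\<And>x. norm (\<phi> x) \<le> K"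
    and lam: "lam > 0" and sigma2: "sigma2 > 0" and \<delta>: "0 < \<delta>" "\<delta> < 1" and kN: "k \<le> N"
    and k: "real k \<ge> 8/3 * ln (4 * CARD('r) / \<delta>) * (8 * K^2 / lam)^2"
  shows "\<exists>E\<in>sets (PiM {0..<N} (\<lambda>_. P) \<Otimes>\<^sub>M measure_pmf (pmf_of_set (subsamples N k))).
           1 - \<delta> \<le> measure (PiM {0..<N} (\<lambda>_. P) \<Otimes>\<^sub>M measure_pmf (pmf_of_set (subsamples N k))) E \<and>
           (\<forall>(x, s)\<in>E. \<forall>xs. spec_norm (length xs) (\<lambda>i j. pred_cov sigma2 N (emp_second_moment \<phi> (x \<circ> s) k) \<phi> xs i j
                                                  - pred_cov sigma2 N (emp_second_moment \<phi> x N) \<phi> xs i j)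
              \<le> real (length xs) * (2 * K^4 / lam) * sqrt (8 * ln (4 * CARD('r) / \<delta>) / (3 * real k)))"
  using lam k unfolding lam_def
  by (intro pmf_of_set_mixture_event prob_space_PiM P finite_subsamples subsamples_nonempty kN
      subsample_pred_cov_close_whp[OF P \<phi> K _ sigma2 \<delta> _ kN])

theorem theorem3p5:
  fixes P :: "'d::euclidean_space measure"
    and phir :: "'d \<Rightarrow> real^'r"
    and L :: "real^'r^'r"
    and sigma2 K delta :: real
    and N k :: nat
  defines "phiL \<equiv> (\<lambda>x. transpose L *v phir x)"
  defines "SigmaP \<equiv> second_moment P phiL"
  defines "M \<equiv> (PiM {0..<N} (\<lambda>_. P)) \<Otimes>\<^sub>M measure_pmf (pmf_of_set (subsamples N k))"
  assumes "sigma2 > 0"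
    and "prob_space P" and "sets P = sets borel"
    and "phir \<in> borel_measurable borel"
    and "\<And>x. norm (phiL x) \<le> K"
    and "lambda_min SigmaP > 0"
    and "delta > 0"
    and "k \<le> N"
    and "real k \<ge> 8/3 * ln (4 * CARD('r) / delta) * (8 * K^2 / lambda_min SigmaP)^2"
  shows "\<exists>E \<in> sets M. measure M E \<ge> 1 - delta \<and>
    (\<forall>(x, s) \<in> E. \<forall>xs :: 'd list.
       let SigN = (1 / real N) *\<^sub>R (\<Sum>i<N. outer (phiL (x i)) (phiL (x i)));
           Sigk = (1 / real k) *\<^sub>R (\<Sum>i<k. outer (phiL (x (s i))) (phiL (x (s i))))
       in spec_norm (length xs)
            (\<lambda>i j. pred_cov sigma2 N Sigk phiL xs i j - pred_cov sigma2 N SigN phiL xs i j)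
          \<le> real (length xs) * (2 * K^4 / lambda_min SigmaP)
              * sqrt (8 * ln (4 * CARD('r) / delta) / (3 * real k)))"
proof -
  have "phiL \<in> borel_measurable borel"
    unfolding \<open>phiL \<equiv> (\<lambda>x. transpose L *v phir x)\<close> by (rule borel_measurable_matrix_vector_mult[OF assms(7)])
  then have phiL: "phiL \<in> borel_measurable P"
    by (subst measurable_cong_sets[OF assms(6) refl])
  show ?thesis
  proof (cases "delta < 1")
    case True
    note SigmaP = \<open>SigmaP \<equiv> second_moment P phiL\<close>
    show ?thesis
      using pred_cov_close_whp[OF assms(5) phiL assms(8) assms(9)[unfolded SigmaP] assms(4) assms(10) True
          assms(11) assms(12)[unfolded SigmaP]]
      unfolding \<open>M \<equiv> _\<close> SigmaP Let_def emp_second_moment_def comp_def .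
  qed (auto intro: bexI[of _ "{}"])
qed

end
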